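(* Let $\bm A\in\mathbb R^{m\times n}$, $\bm D\in\mathbb R^{n\times d}$ with $\bm D\bm D^\top=\bm I_n$, $0<\alpha\le1$, $\lambda>0$, $\mu>0$, let $s\ge2$ be an integer, and let $\bm b=\bm A\bm x+\bm e$ with $\bm x\in\mathbb R^n$, $\|\bm e\|_2\le\lambda$. Let $T$ be an index set of $s$ largest-magnitude entries of $\bm D^\top\bm x$, and let $(\hat{\bm x},\hat{\bm z})$ be a minimizer of $$\min_{\bm x\in\mathbb R^n,\ \bm z\in\mathbb R^d}\ \lambda(\|\bm z\|_1-\alpha\|\bm z\|_2)+\tfrac12\|\bm A\bm x-\bm b\|_2^2+\tfrac{\mu}2\|\bm D^\top\bm x-\bm z\|_2^2.$$ Set $K=\sqrt{\frac{\alpha+\sqrt s}{\sqrt s}+\frac{\alpha^2}{4s}}+\frac{\alpha+1}{2\sqrt s}+1$ and $W=2\|\bm D_{T^c}^\top\bm x\|_1+\frac{(\alpha+1)^2d}{2}\frac{\lambda}{\mu}$. (i) Let $t\ge3$ be real and suppose $\rho:=\rho_{s,t}=\delta_{ts}+\sqrt{\frac{\lceil(t-1)s\rceil}{(t-1)^2s}}\frac{(\sqrt2+1)(\sqrt s+\alpha)}{\sqrt2(\sqrt s-1)}\theta_{ts,(t-1)s}<1$. Set $\delta:=\delta_{ts}$, $\tau=\frac{(\sqrt2+1)\theta_{ts,(t-1)s}}{\sqrt2(1-\rho)}\frac{\sqrt{(t-1)s}}{(t-1)(s-\sqrt s)}$, $C=1+\frac{(\sqrt2+1)\theta_{ts,(t-1)s}}{\sqrt2(1-\rho)}\frac{\sqrt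 s+\alpha}{s-\sqrt s}\frac{\sqrt{(t-1)s}}{t-1}$, $Q=C(1-\rho)+(\sqrt s+\alpha)\sqrt{1+\delta}$. Then $$\|\hat{\bm x}-\bm x\|_2\le\Big(K\Big(\tau+\frac{(\tau(1-\rho)+\sqrt{1+\delta})C}{Q}\Big)+\frac12\Big(1+\frac{C(1-\rho)}{Q}\Big)\Big)W+\Big(K\frac{\tau(1-\rho)+\sqrt{1+\delta}}{1-\rho}+\frac12\Big)\Big(C+\frac{(\sqrt s+\alpha)\sqrt{1+\delta}}{1-\rho}\Big)2\lambda.$$ (ii) Suppose instead $\rho:=\rho_s=\delta_s+\frac{(\sqrt2+1)(\sqrt s+\alpha)}{\sqrt2(\sqrt s-1)}\theta_{s,s}<1$, and set $\delta:=\delta_s$, $\tau=\frac{(\sqrt2+1)\theta_{s,s}}{\sqrt2(1-\rho)}\frac1{\sqrt s-1}$, $C=1+\frac{(\sqrt2+1)\theta_{s,s}}{\sqrt2(1-\rho)}\frac{\sqrt s+\alpha}{\sqrt s-1}$, $Q=C(1-\rho)+(\sqrt s+\alpha)\sqrt{1+\delta}$. Then the same bound as in (i) holds with these $\rho,\delta,\tau,C,Q$.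
   Context: For an index set $S\subseteq\{1,\dots,d\}$, $S^c$ is its complement and $\bm D_S$ denotes $\bm D$ with all columns not indexed by $S$ set to zero (so $\bm D_{T^c}^\top\bm x$ is $\bm D^\top\bm x$ with entries in $T$ set to zero). A vector is $s$-sparse if it has at most $s$ nonzero entries. $\delta_s$ (the $\bm D$-RIC) is the smallest $\delta\ge0$ with $(1-\delta)\|\bm D\bm v\|_2^2\le\|\bm A\bm D\bm v\|_2^2\le(1+\delta)\|\bm D\bm v\|_2^2$ for all $s$-sparse $\bm v\in\mathbb R^d$; $\theta_{s,t}$ (the $\bm D$-ROC) is the smallest nonnegative number with $|\langle\bm A\bm D\bm u,\bm A\bm D\bm v\rangle-\langle\bm D\bm u,\bm D\bm v\rangle|\le\theta_{s,t}\|\bm u\|_2\|\bm v\|_2$ for all $s$-sparse $\bm u$ and $t$-sparse $\bm v$ in $\mathbb R^d$. For non-integer orders, $\delta_{ts}:=\delta_{\lceil ts\rceil}$ and $\theta_{ts,(t-1)s}:=\theta_{\lceil ts\rceil,\lceil(t-1)s\rceil}$. *)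

theory Defs
  imports "HOL-Analysis.Analysis"
begin

definition sparse :: "nat \<Rightarrow> real^'d \<Rightarrow> bool" where
  "sparse s v \<longleftrightarrow> card {i. v $ i \<noteq> 0} \<le> s"

definition norm1 :: "real^'d \<Rightarrow> real" where
  "norm1 v = (\<Sum>i\<in>UNIV. \<bar>v $ i\<bar>)"

definition Dcols :: "'d set \<Rightarrow> real^'d^'n \<Rightarrow> real^'d^'n" where
  "Dcols S D = (\<chi> i j. if j \<in> S then D $ i $ j else 0)"

definition DRIC :: "real^'n^'m \<Rightarrow> real^'d^'n \<Rightarrow> nat \<Rightarrow> real" where
  "DRIC A D s = Inf {\<delta>. \<delta> \<ge> 0 \<and> (\<forall>v. sparse s v \<longrightarrow>
      (1 - \<delta>) * (norm (D *v v))^2 \<le> (norm (A *v (D *v v)))^2 \<and>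
      (norm (A *v (D *v v)))^2 \<le> (1 + \<delta>) * (norm (D *v v))^2)}"

definition DROC :: "real^'n^'m \<Rightarrow> real^'d^'n \<Rightarrow> nat \<Rightarrow> nat \<Rightarrow> real" where
  "DROC A D s t = Inf {\<theta>. \<theta> \<ge> 0 \<and> (\<forall>u v. sparse s u \<and> sparse t v \<longrightarrow>
      \<bar>inner (A *v (D *v u)) (A *v (D *v v)) - inner (D *v u) (D *v v)\<bar> \<le> \<theta> * norm u * norm v)}"

definition objective :: "real \<Rightarrow> real \<Rightarrow> real \<Rightarrow> real^'n^'m \<Rightarrow> real^'d^'n \<Rightarrow> real^'m
    \<Rightarrow> real^'n \<Rightarrow> real^'d \<Rightarrow> real" where
  "objective lam \<alpha> \<mu> A D b x z =
     lam * (norm1 z - \<alpha> * norm z) + 1/2 * (norm (A *v x - b))^2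
     + \<mu>/2 * (norm (transpose D *v x - z))^2"

definition err_bound :: "real \<Rightarrow> real \<Rightarrow> real \<Rightarrow> real \<Rightarrow> real \<Rightarrow> real \<Rightarrow> real
    \<Rightarrow> real \<Rightarrow> real \<Rightarrow> real \<Rightarrow> real" where
  "err_bound s \<alpha> lam K W \<rho> \<delta> \<tau> C Q =
     (K * (\<tau> + (\<tau> * (1 - \<rho>) + sqrt (1 + \<delta>)) * C / Q) + 1/2 * (1 + C * (1 - \<rho>) / Q)) * W
     + (K * (\<tau> * (1 - \<rho>) + sqrt (1 + \<delta>)) / (1 - \<rho>) + 1/2)
       * (C + (sqrt s + \<alpha>) * sqrt (1 + \<delta>) / (1 - \<rho>)) * 2 * lam"

end

theory Submission
  imports Defs
begin

text \<open>Write \<open>h = xh - x\<close> and \<open>v = D\<^sup>T h\<close>; since \<open>D D\<^sup>T = I\<close>, \<open>\<parallel>h\<parallel> = \<parallel>v\<parallel>\<close>. Comparing the objective at the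
  minimizer with its values along the segment towards \<open>(x, D\<^sup>T x)\<close> gives
  \<open>\<parallel>A h\<parallel>\<^sup>2 - \<lambda> \<parallel>A h\<parallel> \<le> \<lambda> (\<parallel>D\<^sup>T x\<parallel>\<^sub>1 - \<parallel>D\<^sup>T xh\<parallel>\<^sub>1 + \<alpha> \<parallel>h\<parallel> + \<dots>)\<close>. This places \<open>v\<close> in an approximate cone:
  the \<open>\<ell>\<^sub>1\<close> mass of \<open>v\<close> outside the set \<open>S\<close> of its \<open>s\<close> largest entries is controlled by
  \<open>\<parallel>v\<^sub>S\<parallel>\<close> and \<open>W + \<parallel>A h\<parallel>\<close>, and so is \<open>\<parallel>h\<parallel>\<close>. The restricted isometry and orthogonality
  constants bound \<open>\<parallel>v\<^sub>S\<parallel>\<close> (in part (i): the norm of \<open>v\<close> on \<open>S\<close> enlarged by the next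
  \<open>\<lceil>(t-1)s\<rceil>\<close> largest entries) in terms of \<open>\<parallel>A h\<parallel>\<close> and \<open>W\<close>, the tail being cut into blocks of
  decreasing entries as in Cai, Wang and Xu. Solving the quadratic inequality for \<open>\<parallel>A h\<parallel>\<close>
  finally bounds \<open>\<parallel>h\<parallel>\<close>.\<close>

definition vec_restrict :: "'d set \<Rightarrow> real^'d \<Rightarrow> real^'d" where
  "vec_restrict B v = (\<chi> i. if i \<in> B then v $ i else 0)"

lemma vec_restrict_nth [simp]: "vec_restrict B v $ i = (if i \<in> B then v $ i else 0)"
  by (simp add: vec_restrict_def)

lemma vec_restrict_UNIV [simp]: "vec_restrict UNIV v = v"
  by (simp add: vec_eq_iff)

lemma vec_restrict_add_Compl: "vec_restrict B v + vec_restrict (- B) v = v"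
  by (simp add: vec_eq_iff)

lemma power2_norm_vec_eq_sum: "(norm (v::real^'d))\<^sup>2 = (\<Sum>i\<in>UNIV. (v $ i)\<^sup>2)"
  by (simp add: norm_vec_def L2_set_def sum_nonneg)

lemma power2_norm_vec_restrict: "(norm (vec_restrict B v))\<^sup>2 = (\<Sum>i\<in>B. (v $ i)\<^sup>2)"
proof -
  have "(norm (vec_restrict B v))\<^sup>2 = (\<Sum>i\<in>UNIV. if i \<in> B then (v $ i)\<^sup>2 else 0)"
    unfolding power2_norm_vec_eq_sum by (rule sum.cong) auto
  then show ?thesis by (simp add: sum.If_cases)
qed

lemma norm_vec_restrict: "norm (vec_restrict B v) = sqrt (\<Sum>i\<in>B. (v $ i)\<^sup>2)"
  by (metis norm_ge_zero power2_norm_vec_restrict real_sqrt_unique)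

lemma norm_vec_restrict_mono: "S \<subseteq> H \<Longrightarrow> norm (vec_restrict S v) \<le> norm (vec_restrict H v)"
  unfolding norm_vec_restrict by (intro real_sqrt_le_mono sum_mono2) auto

lemma inner_vec_restrict_self: "inner (vec_restrict H v) v = (norm (vec_restrict H v))\<^sup>2"
  unfolding power2_norm_vec_eq_sum inner_vec_def by (intro sum.cong) (auto simp: power2_eq_square)

lemma norm1_vec_restrict: "norm1 (vec_restrict B v) = (\<Sum>i\<in>B. \<bar>v $ i\<bar>)"
proof -
  have "norm1 (vec_restrict B v) = (\<Sum>i\<in>UNIV. if i \<in> B then \<bar>v $ i\<bar> else 0)"
    unfolding norm1_def by (rule sum.cong) auto
  then show ?thesis by (simp add: sum.If_cases)
qed

lemma sparse_vec_restrict: "card B \<le> k \<Longrightarrow> sparse k (vec_restrict B v)"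
  unfolding sparse_def
  by (rule order_trans[OF card_mono]) auto

lemma norm1_nonneg: "norm1 v \<ge> 0"
  unfolding norm1_def by (simp add: sum_nonneg)

lemma norm1_triangle: "norm1 (a + b) \<le> norm1 a + norm1 b"
  unfolding norm1_def by (simp add: sum.distrib[symmetric] sum_mono abs_triangle_ineq)

lemma norm1_scaleR: "norm1 (c *\<^sub>R a) = \<bar>c\<bar> * norm1 a"
  unfolding norm1_def by (simp add: sum_distrib_left abs_mult)

lemma norm1_split_Compl: "norm1 v = norm1 (vec_restrict S v) + norm1 (vec_restrict (- S) v)"
  unfolding norm1_vec_restrict unfolding norm1_def
  by (metis Compl_eq_Diff_UNIV add.commute finite subset_UNIV sum.subset_diff)

lemma sum_abs_le_sqrt_card: "finite B \<Longrightarrow> (\<Sum>i\<in>B. \<bar>f i\<bar>) \<le> sqrt (card B) * sqrt (\<Sum>i\<in>B. (f i)\<^sup>2)"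
  using L2_set_mult_ineq[of f "\<lambda>_. 1::real" B]
  by (simp add: L2_set_def L2_set_constant mult.commute)

lemma norm1_vec_restrict_le: "finite B \<Longrightarrow> norm1 (vec_restrict B v) \<le> sqrt (card B) * norm (vec_restrict B v)"
  unfolding norm1_vec_restrict norm_vec_restrict by (rule sum_abs_le_sqrt_card)

lemma norm1_le_sqrt_card: "norm1 (v::real^'d) \<le> sqrt CARD('d) * norm v"
  using norm1_vec_restrict_le[of UNIV v] by simp

lemma norm_le_norm1: "norm (v::real^'d) \<le> norm1 v"
  unfolding norm1_def norm_vec_def using L2_set_le_sum_abs[of "\<lambda>i. \<bar>v$i\<bar>" UNIV] by simp

lemma inner_matrix_vector_transpose: "inner (D *v z) y = inner z (transpose D *v (y::real^'n))"
  for D :: "real^'d^'n"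
  by (metis dot_lmul_matrix inner_commute transpose_matrix_vector)

lemma tight_frame_reconstruct:
  "D ** transpose D = mat 1 \<Longrightarrow> D *v (transpose D *v y) = (y::real^'n)" for D :: "real^'d^'n"
  by (simp only: matrix_vector_mul_assoc) simp

lemma norm_transpose_tight_frame:
  fixes D :: "real^'d^'n"
  assumes "D ** transpose D = mat 1"
  shows "norm (transpose D *v y) = norm y"
proof -
  have "inner (transpose D *v y) (transpose D *v y) = inner y y"
    using inner_matrix_vector_transpose[of D "transpose D *v y" y] tight_frame_reconstruct[OF assms]
    by (simp add: inner_commute)
  then show ?thesis by (simp add: norm_eq_sqrt_inner)
qed

lemma norm_tight_frame_le:
  fixes D :: "real^'d^'n"
  assumes "D ** transpose D = mat 1"
  shows "norm (D *v z) \<le> norm z"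
proof -
  have "(norm (D *v z))\<^sup>2 = inner z (transpose D *v (D *v z))"
    using inner_matrix_vector_transpose[of D z "D *v z"] by (simp add: power2_norm_eq_inner)
  also have "\<dots> \<le> norm z * norm (transpose D *v (D *v z))" by (rule norm_cauchy_schwarz)
  also have "\<dots> = norm z * norm (D *v z)" using norm_transpose_tight_frame[OF assms] by simp
  finally show ?thesis by (cases "norm (D *v z) = 0") (auto simp: power2_eq_square)
qed

lemma le_Inf_mult:
  fixes S :: "real set"
  assumes "S \<noteq> {}" "\<And>d. d \<in> S \<Longrightarrow> X \<le> d * q" "q \<ge> 0"
  shows "X \<le> Inf S * q"
proof (cases "q = 0")
  case True
  with assms(1,2) show ?thesis by fastforce
next
  case False
  with assms(3) have q: "q > 0" by simp
  have "X / q \<le> Inf S"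
    by (rule cInf_greatest[OF assms(1)]) (use assms(2) q in \<open>simp add: divide_le_eq\<close>)
  with q show ?thesis by (simp add: divide_le_eq)
qed

lemma matrix_vector_mult_bounded: "\<exists>B>0. \<forall>x. norm ((A::real^'n^'m) *v x) \<le> B * norm x"
  using bounded_linear.pos_bounded[of "\<lambda>x. A *v x"] by (auto simp: mult.commute)

definition DRIC_set :: "real^'n^'m \<Rightarrow> real^'d^'n \<Rightarrow> nat \<Rightarrow> real set" where
  "DRIC_set A D s = {\<delta>. \<delta> \<ge> 0 \<and> (\<forall>v. sparse s v \<longrightarrow>
      (1 - \<delta>) * (norm (D *v v))^2 \<le> (norm (A *v (D *v v)))^2 \<and>
      (norm (A *v (D *v v)))^2 \<le> (1 + \<delta>) * (norm (D *v v))^2)}"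

definition DROC_set :: "real^'n^'m \<Rightarrow> real^'d^'n \<Rightarrow> nat \<Rightarrow> nat \<Rightarrow> real set" where
  "DROC_set A D s t = {\<theta>. \<theta> \<ge> 0 \<and> (\<forall>u v. sparse s u \<and> sparse t v \<longrightarrow>
      \<bar>inner (A *v (D *v u)) (A *v (D *v v)) - inner (D *v u) (D *v v)\<bar> \<le> \<theta> * norm u * norm v)}"

lemma DRIC_eq_Inf: "DRIC A D s = Inf (DRIC_set A D s)"
  unfolding DRIC_def DRIC_set_def ..

lemma DROC_eq_Inf: "DROC A D s t = Inf (DROC_set A D s t)"
  unfolding DROC_def DROC_set_def ..

lemma DRIC_set_nonempty: "DRIC_set A D s \<noteq> {}"
proof -
  obtain B where B: "\<And>x. norm (A *v x) \<le> B * norm x" using matrix_vector_mult_bounded by blast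
  have "max 1 (B\<^sup>2) \<in> DRIC_set A D s"
  proof -
    have "(norm (A *v y))\<^sup>2 \<le> (1 + max 1 (B\<^sup>2)) * (norm y)\<^sup>2" for y
    proof -
      have "(norm (A *v y))\<^sup>2 \<le> (B * norm y)\<^sup>2" using B[of y] by (intro power_mono) auto
      also have "\<dots> \<le> (1 + max 1 (B\<^sup>2)) * (norm y)\<^sup>2"
        by (simp add: power_mult_distrib mult_right_mono)
      finally show ?thesis .
    qed
    moreover have "(1 - max 1 (B\<^sup>2)) * (norm y)\<^sup>2 \<le> (norm (A *v y))\<^sup>2" for y
      by (rule order_trans[of _ 0]) (auto intro: mult_nonpos_nonneg)
    ultimately show ?thesis unfolding DRIC_set_def by auto
  qed
  then show ?thesis by auto
qed

lemma DRIC_nonneg: "DRIC A D s \<ge> 0"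
  unfolding DRIC_eq_Inf using DRIC_set_nonempty by (intro cInf_greatest) (auto simp: DRIC_set_def)

lemma DRIC_lower:
  assumes "sparse s v"
  shows "(1 - DRIC A D s) * (norm (D *v v))\<^sup>2 \<le> (norm (A *v (D *v v)))\<^sup>2"
proof -
  have "(norm (D *v v))\<^sup>2 - (norm (A *v (D *v v)))\<^sup>2 \<le> Inf (DRIC_set A D s) * (norm (D *v v))\<^sup>2"
    by (rule le_Inf_mult[OF DRIC_set_nonempty]) (use assms in \<open>auto simp: DRIC_set_def algebra_simps\<close>)
  then show ?thesis unfolding DRIC_eq_Inf by (simp add: algebra_simps)
qed

lemma DRIC_upper:
  assumes "sparse s v"
  shows "(norm (A *v (D *v v)))\<^sup>2 \<le> (1 + DRIC A D s) * (norm (D *v v))\<^sup>2"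
proof -
  have "(norm (A *v (D *v v)))\<^sup>2 - (norm (D *v v))\<^sup>2 \<le> Inf (DRIC_set A D s) * (norm (D *v v))\<^sup>2"
    by (rule le_Inf_mult[OF DRIC_set_nonempty]) (use assms in \<open>auto simp: DRIC_set_def algebra_simps\<close>)
  then show ?thesis unfolding DRIC_eq_Inf by (simp add: algebra_simps)
qed

lemma DROC_set_nonempty:
  fixes A :: "real^'n^'m" and D :: "real^'d^'n"
  assumes DDt: "D ** transpose D = mat 1"
  shows "DROC_set A D s t \<noteq> {}"
proof -
  obtain B where B: "B > 0" "\<And>x. norm (A *v x) \<le> B * norm x"
    using matrix_vector_mult_bounded by blast
  have AD: "norm (A *v (D *v u)) \<le> B * norm u" for u
    using B(2)[of "D *v u"] norm_tight_frame_le[OF DDt, of u] B(1)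
    by (meson mult_left_mono less_imp_le order_trans)
  have "B\<^sup>2 + 1 \<in> DROC_set A D s t"
  proof -
    have "\<bar>inner (A *v (D *v u)) (A *v (D *v v)) - inner (D *v u) (D *v v)\<bar> \<le> (B\<^sup>2 + 1) * norm u * norm v"
      for u v
    proof -
      have "\<bar>inner (A *v (D *v u)) (A *v (D *v v)) - inner (D *v u) (D *v v)\<bar>
          \<le> norm (A *v (D *v u)) * norm (A *v (D *v v)) + norm (D *v u) * norm (D *v v)"
        by (smt (verit) Cauchy_Schwarz_ineq2)
      also have "\<dots> \<le> (B * norm u) * (B * norm v) + norm u * norm v"
        by (intro add_mono mult_mono AD norm_tight_frame_le[OF DDt]) (use B(1) in auto)
      also have "\<dots> = (B\<^sup>2 + 1) * norm u * norm v" by (simp add: algebra_simps power2_eq_square)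
      finally show ?thesis .
    qed
    then show ?thesis unfolding DROC_set_def by (auto intro: add_nonneg_nonneg)
  qed
  then show ?thesis by auto
qed

lemma DROC_nonneg:
  "D ** transpose D = mat 1 \<Longrightarrow> DROC A D s t \<ge> 0"
  unfolding DROC_eq_Inf by (intro cInf_greatest DROC_set_nonempty) (auto simp: DROC_set_def)

lemma DROC_bound:
  assumes "D ** transpose D = mat 1" "sparse s u" "sparse t v"
  shows "\<bar>inner (A *v (D *v u)) (A *v (D *v v)) - inner (D *v u) (D *v v)\<bar>
    \<le> DROC A D s t * (norm u * norm v)"
  unfolding DROC_eq_Inf
  by (rule le_Inf_mult[OF DROC_set_nonempty[OF assms(1)]]) (use assms in \<open>auto simp: DROC_set_def mult.assoc\<close>)

lemma exists_subset_of_largest: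
  fixes f :: "'d::finite \<Rightarrow> real"
  shows "k \<le> card U \<Longrightarrow> \<exists>B\<subseteq>U. card B = k \<and> (\<forall>i\<in>B. \<forall>j\<in>U-B. \<bar>f j\<bar> \<le> \<bar>f i\<bar>)"
proof (induction k)
  case 0
  then show ?case by (intro exI[of _ "{}"]) auto
next
  case (Suc k)
  then obtain B where B: "B \<subseteq> U" "card B = k" "\<forall>i\<in>B. \<forall>j\<in>U-B. \<bar>f j\<bar> \<le> \<bar>f i\<bar>" by auto
  have "card (U - B) > 0" using Suc.prems B by (simp add: card_Diff_subset)
  then have ne: "U - B \<noteq> {}" by (metis card.empty less_irrefl)
  define mx where "mx = Max ((\<lambda>l. \<bar>f l\<bar>) ` (U - B))"
  have "mx \<in> (\<lambda>l. \<bar>f l\<bar>) ` (U - B)" unfolding mx_def using ne by (intro Max_in) auto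
  then obtain j where j1: "j \<in> U - B" "\<bar>f j\<bar> = mx" by auto
  have "\<forall>l\<in>U-B. \<bar>f l\<bar> \<le> mx" unfolding mx_def by auto
  with j1 have j: "j \<in> U - B" "\<forall>l\<in>U-B. \<bar>f l\<bar> \<le> \<bar>f j\<bar>" by auto
  show ?case
  proof (intro exI[of _ "insert j B"] conjI)
    show "insert j B \<subseteq> U" using B j by auto
    show "card (insert j B) = Suc k" using B j by (simp add: finite_subset)
    show "\<forall>i\<in>insert j B. \<forall>l\<in>U - insert j B. \<bar>f l\<bar> \<le> \<bar>f i\<bar>" using B(3) j by auto
  qed
qed

text \<open>A variant of the shifting inequality of Cai, Wang and Xu.\<close>

lemma sqrt_sum_squares_le_spread:
  fixes f :: "'d \<Rightarrow> real"
  assumes fin: "finite B" and kpos: "k > 0" and cardB: "card B \<le> k"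
    and bnd: "\<And>i. i \<in> B \<Longrightarrow> m \<le> \<bar>f i\<bar> \<and> \<bar>f i\<bar> \<le> M"
    and m0: "0 \<le> m" "m \<le> M" and short: "card B < k \<Longrightarrow> m = 0"
  shows "sqrt (\<Sum>i\<in>B. (f i)\<^sup>2) \<le> (\<Sum>i\<in>B. \<bar>f i\<bar>) / sqrt k + sqrt k * (M - m) / 4"
proof -
  define S1 where "S1 = (\<Sum>i\<in>B. \<bar>f i\<bar>)"
  define r where "r = sqrt k"
  have r: "r > 0" "r\<^sup>2 = k" using kpos by (auto simp: r_def)
  have pt: "(f i)\<^sup>2 \<le> (M + m) * \<bar>f i\<bar> - M * m" if "i \<in> B" for i
  proof -
    have "(\<bar>f i\<bar> - m) * (M - \<bar>f i\<bar>) \<ge> 0" using bnd[OF that] by simp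
    then show ?thesis by (simp add: algebra_simps power2_eq_square)
  qed
  have "(\<Sum>i\<in>B. (f i)\<^sup>2) \<le> (\<Sum>i\<in>B. (M + m) * \<bar>f i\<bar> - M * m)"
    by (rule sum_mono) (rule pt)
  also have "\<dots> = (M + m) * S1 - card B * (M * m)"
    by (simp add: S1_def sum_subtractf sum_distrib_left)
  finally have Q: "(\<Sum>i\<in>B. (f i)\<^sup>2) \<le> (M + m) * S1 - card B * (M * m)" .
  have S1nn: "S1 \<ge> 0" by (simp add: S1_def sum_nonneg)
  have key: "(M + m) * S1 - card B * (M * m) \<le> (S1 / r + r * (M - m) / 4)\<^sup>2"
  proof (cases "card B < k")
    case True
    then have "m = 0" by (rule short)
    have "(S1 / r + r * (M - m) / 4)\<^sup>2 - (M + m) * S1 + card B * (M * m) = (S1 / r - r * M / 4)\<^sup>2"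
      using r \<open>m = 0\<close> by (simp add: field_simps power2_eq_square)
    then show ?thesis by (smt (verit) zero_le_power2)
  next
    case False
    then have cB: "real (card B) = r * r" using cardB r by (simp add: power2_eq_square)
    have "(S1 / r + r * (M - m) / 4)\<^sup>2 - ((M + m) * S1 - card B * (M * m))
        = (S1 / r - r * (M + 3 * m) / 4)\<^sup>2 + r\<^sup>2 * m * (M - m) / 2"
      unfolding cB using r(1) by (simp add: field_simps power2_eq_square)
    moreover have "r\<^sup>2 * m * (M - m) / 2 \<ge> 0" using m0 by simp
    ultimately show ?thesis by (smt (verit) zero_le_power2)
  qed
  have rhs: "S1 / r + r * (M - m) / 4 \<ge> 0" using S1nn r m0 by simp
  have "sqrt (\<Sum>i\<in>B. (f i)\<^sup>2) \<le> sqrt ((S1 / r + r * (M - m) / 4)\<^sup>2)"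
    using Q key by (intro real_sqrt_le_mono) linarith
  also have "\<dots> = S1 / r + r * (M - m) / 4" using rhs by simp
  finally show ?thesis by (simp add: S1_def r_def)
qed

text \<open>\<open>U\<close> is peeled into blocks of its \<open>k\<close> largest remaining entries; the spread terms
  telescope because the minimum of one block bounds the maximum of the next.\<close>

lemma additive_tail_bound:
  fixes E :: "real^'d \<Rightarrow> real" and v :: "real^'d"
  assumes add: "\<And>a b. E (a + b) = E a + E b"
    and blk: "\<And>B. card B \<le> k \<Longrightarrow> \<bar>E (vec_restrict B v)\<bar> \<le> c * norm (vec_restrict B v)"
    and c: "c \<ge> 0" and k: "k > 0"
  shows "(\<forall>i\<in>U. \<bar>v$i\<bar> \<le> M) \<Longrightarrow> 0 \<le> M \<Longrightarrow>
     \<bar>E (vec_restrict U v)\<bar> \<le> c * (norm1 (vec_restrict U v) / sqrt k + sqrt k * M / 4)"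
proof (induction "card U" arbitrary: U M rule: less_induct)
  case less
  show ?case
  proof (cases "card U \<le> k")
    case True
    have "\<bar>E (vec_restrict U v)\<bar> \<le> c * norm (vec_restrict U v)" by (rule blk[OF True])
    also have "norm (vec_restrict U v) \<le> norm1 (vec_restrict U v) / sqrt k + sqrt k * (M - 0) / 4"
      unfolding norm_vec_restrict norm1_vec_restrict
      by (rule sqrt_sum_squares_le_spread) (use True k less.prems in auto)
    finally show ?thesis using c by (simp add: mult_left_mono)
  next
    case False
    then obtain B where B: "B \<subseteq> U" "card B = k" "\<forall>i\<in>B. \<forall>j\<in>U-B. \<bar>v$j\<bar> \<le> \<bar>v$i\<bar>"
      using exists_subset_of_largest[of k U "\<lambda>i. v$i"] by auto
    have Bne: "B \<noteq> {}" using B(2) k by auto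
    define m where "m = Min ((\<lambda>i. \<bar>v$i\<bar>) ` B)"
    have "m \<in> (\<lambda>i. \<bar>v$i\<bar>) ` B" unfolding m_def using Bne by (intro Min_in) auto
    then obtain i0 where i0: "i0 \<in> B" "\<bar>v$i0\<bar> = m" by auto
    have mle: "\<And>i. i \<in> B \<Longrightarrow> m \<le> \<bar>v$i\<bar>" unfolding m_def by auto
    have m0: "0 \<le> m" using i0 by auto
    have mM: "m \<le> M" using i0 B(1) less.prems by auto
    have tailm: "\<forall>j\<in>U-B. \<bar>v$j\<bar> \<le> m" using B(3) i0 by auto
    have cardlt: "card (U - B) < card U"
      using B(1) B(2) False k by (simp add: card_Diff_subset)
    have IH: "\<bar>E (vec_restrict (U - B) v)\<bar> \<le> c * (norm1 (vec_restrict (U - B) v) / sqrt k + sqrt k * m / 4)"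
      using less.hyps[OF cardlt] tailm m0 by blast
    have blkB: "\<bar>E (vec_restrict B v)\<bar> \<le> c * (norm1 (vec_restrict B v) / sqrt k + sqrt k * (M - m) / 4)"
    proof -
      have "\<bar>E (vec_restrict B v)\<bar> \<le> c * norm (vec_restrict B v)" using blk B(2) by simp
      also have "norm (vec_restrict B v) \<le> norm1 (vec_restrict B v) / sqrt k + sqrt k * (M - m) / 4"
        unfolding norm_vec_restrict norm1_vec_restrict
        by (rule sqrt_sum_squares_le_spread) (use B less.prems mle m0 mM k in auto)
      finally show ?thesis using c by (simp add: mult_left_mono)
    qed
    have split: "vec_restrict U v = vec_restrict B v + vec_restrict (U - B) v" using B(1) by (auto simp: vec_eq_iff)
    have n1: "norm1 (vec_restrict U v) = norm1 (vec_restrict B v) + norm1 (vec_restrict (U - B) v)"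
      unfolding norm1_vec_restrict using B(1) by (simp add: sum.subset_diff)
    have "\<bar>E (vec_restrict U v)\<bar> \<le> \<bar>E (vec_restrict B v)\<bar> + \<bar>E (vec_restrict (U - B) v)\<bar>" unfolding split add by simp
    also have "\<dots> \<le> c * (norm1 (vec_restrict B v) / sqrt k + sqrt k * (M - m) / 4) + c * (norm1 (vec_restrict (U - B) v) / sqrt k + sqrt k * m / 4)"
      using blkB IH by simp
    also have "\<dots> = c * (norm1 (vec_restrict U v) / sqrt k + sqrt k * M / 4)"
      unfolding n1 by (simp add: add_divide_distrib diff_divide_distrib ring_distribs)
    finally show ?thesis .
  qed
qed

lemma norm_DRIC_upper:
  assumes "sparse s p"
  shows "norm (A *v (D *v p)) \<le> sqrt (1 + DRIC A D s) * norm (D *v p)"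
proof -
  have "norm (A *v (D *v p)) = sqrt ((norm (A *v (D *v p)))\<^sup>2)" by simp
  also have "\<dots> \<le> sqrt ((1 + DRIC A D s) * (norm (D *v p))\<^sup>2)"
    by (rule real_sqrt_le_mono[OF DRIC_upper[OF assms]])
  also have "\<dots> = sqrt (1 + DRIC A D s) * norm (D *v p)" by (simp add: real_sqrt_mult)
  finally show ?thesis .
qed

lemma DROC_tail_bound:
  fixes A :: "real^'n^'m" and D :: "real^'d^'n"
  assumes DDt: "D ** transpose D = mat 1" and p: "sparse l p" and k: "k > 0"
    and M: "M \<ge> 0" "\<forall>i\<in>U. \<bar>v $ i\<bar> \<le> M"
  shows "\<bar>inner (A *v (D *v p)) (A *v (D *v (vec_restrict U v))) - inner (D *v p) (D *v (vec_restrict U v))\<bar>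
    \<le> DROC A D l k * norm p * (norm1 (vec_restrict U v) / sqrt k + sqrt k * M / 4)"
proof -
  define E where "E = (\<lambda>q. inner (A *v (D *v p)) (A *v (D *v q)) - inner (D *v p) (D *v q))"
  have "E (a + b) = E a + E b" for a b
    unfolding E_def by (simp add: matrix_vector_right_distrib inner_add_right)
  moreover have "\<bar>E (vec_restrict B v)\<bar> \<le> (DROC A D l k * norm p) * norm (vec_restrict B v)"
    if "card B \<le> k" for B
    using DROC_bound[OF DDt p sparse_vec_restrict[OF that]] unfolding E_def by (simp add: mult.assoc)
  moreover have "DROC A D l k * norm p \<ge> 0" using DROC_nonneg[OF DDt, of A l k] by simp
  ultimately show ?thesis
    using additive_tail_bound[where E=E and k=k and c="DROC A D l k * norm p" and v=v and U=U and M=M] k M unfolding E_def by simp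
qed

text \<open>Test \<open>A h\<close> against \<open>A D p\<close>, where \<open>p\<close> is \<open>D\<^sup>T h\<close> restricted to \<open>H\<close>, and split
  \<open>h = D p + D p'\<close>.\<close>

lemma DRIC_DROC_restricted_bound:
  fixes A :: "real^'n^'m" and D :: "real^'d^'n" and h :: "real^'n" and H :: "'d set"
  assumes DDt: "D ** transpose D = mat 1"
    and cardH: "card H \<le> kH" and k: "k > 0"
    and M: "M \<ge> 0" "\<forall>i\<in>-H. \<bar>(transpose D *v h) $ i\<bar> \<le> M"
  shows "(1 - DRIC A D kH) * norm (vec_restrict H (transpose D *v h)) \<le>
     sqrt (1 + DRIC A D kH) * norm (A *v h) +
     DROC A D kH k * (norm1 (vec_restrict (-H) (transpose D *v h)) / sqrt k + sqrt k * M / 4)"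
proof -
  define v where "v = transpose D *v h"
  define \<delta> where "\<delta> = DRIC A D kH"
  define \<theta> where "\<theta> = DROC A D kH k"
  define p where "p = vec_restrict H v"
  define p' where "p' = vec_restrict (-H) v"
  define a where "a = norm p"
  define tail where "tail = norm1 p' / sqrt k + sqrt k * M / 4"
  have \<delta>0: "\<delta> \<ge> 0" unfolding \<delta>_def by (rule DRIC_nonneg)
  have \<theta>0: "\<theta> \<ge> 0" unfolding \<theta>_def by (rule DROC_nonneg[OF DDt])
  have tail0: "tail \<ge> 0" unfolding tail_def using M norm1_nonneg[of p'] by simp
  have sp: "sparse kH p" unfolding p_def by (rule sparse_vec_restrict[OF cardH])
  have h_split: "h = D *v p + D *v p'"
    using tight_frame_reconstruct[OF DDt, of h] vec_restrict_add_Compl[of H v]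
    unfolding p_def p'_def v_def by (metis matrix_vector_right_distrib)
  have Dp: "norm (D *v p) \<le> a" unfolding a_def by (rule norm_tight_frame_le[OF DDt])
  have inner_Dp_h: "inner (D *v p) h = a\<^sup>2"
    using inner_matrix_vector_transpose[of D p h] inner_vec_restrict_self[of H v]
    unfolding a_def p_def v_def by simp
  have tail_bound: "\<bar>inner (A *v (D *v p)) (A *v (D *v p')) - inner (D *v p) (D *v p')\<bar> \<le> \<theta> * a * tail"
    using DROC_tail_bound[OF DDt sp k M(1), of "-H" v] M(2)
    unfolding p'_def \<theta>_def a_def tail_def v_def by simp
  have lower: "inner (A *v (D *v p)) (A *v h) \<ge> (1 - \<delta>) * a\<^sup>2 - \<theta> * a * tail"
  proof -
    have "inner (A *v (D *v p)) (A *v h)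
        = (norm (A *v (D *v p)))\<^sup>2 + inner (A *v (D *v p)) (A *v (D *v p'))"
      unfolding h_split by (simp add: matrix_vector_right_distrib inner_add_right power2_norm_eq_inner)
    moreover have "inner (D *v p) (D *v p') = a\<^sup>2 - (norm (D *v p))\<^sup>2"
      using inner_Dp_h unfolding h_split by (simp add: inner_add_right power2_norm_eq_inner)
    moreover have "\<delta> * (norm (D *v p))\<^sup>2 \<le> \<delta> * a\<^sup>2"
      using Dp \<delta>0 by (intro mult_left_mono power_mono) auto
    ultimately show ?thesis
      using DRIC_lower[OF sp, where A=A and D=D] tail_bound unfolding \<delta>_def by (simp add: algebra_simps abs_le_iff)
  qed
  have upper: "inner (A *v (D *v p)) (A *v h) \<le> sqrt (1 + \<delta>) * a * norm (A *v h)"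
  proof -
    have "inner (A *v (D *v p)) (A *v h) \<le> norm (A *v (D *v p)) * norm (A *v h)"
      by (rule norm_cauchy_schwarz)
    also have "\<dots> \<le> sqrt (1 + \<delta>) * a * norm (A *v h)"
      using norm_DRIC_upper[OF sp, where A=A and D=D] Dp \<delta>0 unfolding \<delta>_def
      by (intro mult_right_mono) (auto intro: order_trans mult_left_mono)
    finally show ?thesis .
  qed
  have "a * ((1 - \<delta>) * a) \<le> a * (sqrt (1 + \<delta>) * norm (A *v h) + \<theta> * tail)"
    using lower upper by (simp add: algebra_simps power2_eq_square)
  then have "(1 - \<delta>) * a \<le> sqrt (1 + \<delta>) * norm (A *v h) + \<theta> * tail"
    using \<delta>0 \<theta>0 tail0 by (cases "a = 0") (auto simp: a_def)
  then show ?thesis unfolding a_def p_def v_def \<delta>_def \<theta>_def tail_def p'_def .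
qed

lemma nonneg_of_perturbation:
  fixes L M :: real
  assumes "\<And>\<epsilon>. 0 < \<epsilon> \<Longrightarrow> \<epsilon> < 1 \<Longrightarrow> 0 \<le> L + \<epsilon> * M"
  shows "0 \<le> L"
proof (rule ccontr)
  assume "\<not> 0 \<le> L"
  then have L: "L < 0" by simp
  define \<epsilon> where "\<epsilon> = min (1/2) (- L / (2 * (\<bar>M\<bar> + 1)))"
  have p: "0 < - L / (2 * (\<bar>M\<bar> + 1))" using L by (intro divide_pos_pos) auto
  have e0: "0 < \<epsilon>" "\<epsilon> < 1" using p unfolding \<epsilon>_def by auto
  have "\<epsilon> * M \<le> \<epsilon> * \<bar>M\<bar>" using e0 by (simp add: mult_left_mono)
  also have "\<dots> \<le> - L / (2 * (\<bar>M\<bar> + 1)) * \<bar>M\<bar>" unfolding \<epsilon>_def by (intro mult_right_mono) auto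
  also have "\<dots> \<le> - L / 2"
    using L by (simp add: field_simps)
  finally have "L + \<epsilon> * M < 0" using L by simp
  with assms[OF e0] show False by simp
qed

lemma penalty_segment_le:
  fixes z u :: "real^'d"
  assumes "0 \<le> \<epsilon>" "\<epsilon> \<le> 1" "0 \<le> \<alpha>"
  shows "norm1 (z + \<epsilon> *\<^sub>R (u - z)) - \<alpha> * norm (z + \<epsilon> *\<^sub>R (u - z))
    \<le> norm1 z - \<alpha> * norm z + \<epsilon> * (norm1 u - norm1 z + \<alpha> * norm (u - z))"
proof -
  have "z + \<epsilon> *\<^sub>R (u - z) = (1 - \<epsilon>) *\<^sub>R z + \<epsilon> *\<^sub>R u" by (simp add: algebra_simps)
  then have "norm1 (z + \<epsilon> *\<^sub>R (u - z)) \<le> norm1 ((1 - \<epsilon>) *\<^sub>R z) + norm1 (\<epsilon> *\<^sub>R u)"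
    by (simp add: norm1_triangle)
  also have "\<dots> = (1 - \<epsilon>) * norm1 z + \<epsilon> * norm1 u" using assms by (simp add: norm1_scaleR)
  finally have "norm1 (z + \<epsilon> *\<^sub>R (u - z)) \<le> (1 - \<epsilon>) * norm1 z + \<epsilon> * norm1 u" .
  moreover have "norm z \<le> norm (z + \<epsilon> *\<^sub>R (u - z)) + \<epsilon> * norm (u - z)"
    using norm_triangle_ineq4[of "z + \<epsilon> *\<^sub>R (u - z)" "\<epsilon> *\<^sub>R (u - z)"] assms by simp
  then have "\<alpha> * norm z \<le> \<alpha> * (norm (z + \<epsilon> *\<^sub>R (u - z)) + \<epsilon> * norm (u - z))"
    using assms(3) by (rule mult_left_mono)
  ultimately show ?thesis by (simp add: algebra_simps)
qed

lemma minimizer_variational_inequality: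
  fixes A :: "real^'n^'m" and D :: "real^'d^'n"
  assumes alpha: "0 \<le> \<alpha>" and lam: "lam \<ge> 0"
    and minimizer: "\<forall>x' z'. objective lam \<alpha> \<mu> A D b xh zh \<le> objective lam \<alpha> \<mu> A D b x' z'"
  shows "inner (A *v xh - b) (A *v (xh - x)) + \<mu> * (norm (transpose D *v xh - zh))\<^sup>2
    \<le> lam * (norm1 (transpose D *v x) - norm1 zh + \<alpha> * norm (transpose D *v x - zh))"
proof -
  define q where "q = A *v (xh - x)"
  define r where "r = A *v xh - b"
  define u where "u = transpose D *v x"
  define w where "w = transpose D *v xh - zh"
  define X where "X = norm1 u - norm1 zh + \<alpha> * norm (u - zh)"
  define pen where "pen = (\<lambda>z::real^'d. norm1 z - \<alpha> * norm z)"
  have "0 \<le> lam * X - inner r q - \<mu> * (norm w)\<^sup>2 + \<epsilon> * ((norm q)\<^sup>2 / 2 + \<mu> * (norm w)\<^sup>2 / 2)"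
    if \<epsilon>: "0 < \<epsilon>" "\<epsilon> < 1" for \<epsilon>
  proof -
    define x' where "x' = xh - \<epsilon> *\<^sub>R (xh - x)"
    define z' where "z' = zh + \<epsilon> *\<^sub>R (u - zh)"
    have Ax': "A *v x' - b = r - \<epsilon> *\<^sub>R q"
      unfolding x'_def r_def q_def by (simp add: matrix_vector_mult_diff_distrib matrix_vector_mult_scaleR)
    have Dx': "transpose D *v x' - z' = (1 - \<epsilon>) *\<^sub>R w"
      unfolding x'_def z'_def w_def u_def
      by (simp add: matrix_vector_mult_diff_distrib matrix_vector_mult_scaleR algebra_simps)
    have "inner (r - \<epsilon> *\<^sub>R q) (r - \<epsilon> *\<^sub>R q) = inner r r - 2 * \<epsilon> * inner r q + \<epsilon>\<^sup>2 * inner q q"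
      by (simp add: inner_diff_left inner_diff_right inner_commute algebra_simps power2_eq_square)
    then have "(norm (r - \<epsilon> *\<^sub>R q))\<^sup>2 = (norm r)\<^sup>2 - 2 * \<epsilon> * inner r q + \<epsilon>\<^sup>2 * (norm q)\<^sup>2"
      by (simp only: power2_norm_eq_inner)
    moreover have "(norm ((1 - \<epsilon>) *\<^sub>R w))\<^sup>2 = (1 - \<epsilon>)\<^sup>2 * (norm w)\<^sup>2"
      by (simp add: power_mult_distrib)
    moreover have "objective lam \<alpha> \<mu> A D b xh zh \<le> objective lam \<alpha> \<mu> A D b x' z'"
      using minimizer by blast
    ultimately have "lam * pen zh + 1/2 * (norm r)\<^sup>2 + \<mu>/2 * (norm w)\<^sup>2
        \<le> lam * pen z' + 1/2 * ((norm r)\<^sup>2 - 2 * \<epsilon> * inner r q + \<epsilon>\<^sup>2 * (norm q)\<^sup>2)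
          + \<mu>/2 * ((1 - \<epsilon>)\<^sup>2 * (norm w)\<^sup>2)"
      unfolding objective_def Ax' Dx' pen_def r_def w_def by simp
    moreover have "lam * pen z' \<le> lam * pen zh + lam * (\<epsilon> * X)"
      using mult_left_mono[OF penalty_segment_le[of \<epsilon> \<alpha> zh u] lam] \<epsilon> alpha
      unfolding pen_def X_def z'_def by (simp add: distrib_left)
    ultimately have "0 \<le> \<epsilon> * (lam * X - inner r q - \<mu> * (norm w)\<^sup>2
        + \<epsilon> * ((norm q)\<^sup>2 / 2 + \<mu> * (norm w)\<^sup>2 / 2))"
      by (simp add: algebra_simps power2_eq_square)
    then show ?thesis using \<epsilon> by (simp add: zero_le_mult_iff)
  qed
  then have "0 \<le> lam * X - inner r q - \<mu> * (norm w)\<^sup>2"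
    by (rule nonneg_of_perturbation)
  then show ?thesis unfolding X_def r_def q_def w_def u_def by simp
qed

lemma mult_sub_square_le: "(a::real) * t - m * t\<^sup>2 \<le> a\<^sup>2 / (4 * m)" if "m > 0"
proof -
  have "0 \<le> (a - 2 * m * t)\<^sup>2" by simp
  then have "4 * m * (a * t - m * t\<^sup>2) \<le> a\<^sup>2" by (simp add: algebra_simps power2_eq_square)
  then show ?thesis using that by (simp add: field_simps)
qed

lemma mismatch_term_le:
  fixes w :: "real^'d"
  assumes alpha: "0 \<le> \<alpha>" and lam: "lam > 0" and mu: "\<mu> > 0"
  shows "lam * (norm1 w + \<alpha> * norm w) - \<mu> * (norm w)\<^sup>2 \<le> lam * ((1 + \<alpha>)\<^sup>2 * CARD('d) * lam / (2 * \<mu>))"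
proof -
  define d where "d = real CARD('d)"
  have d1: "sqrt d \<ge> 1" unfolding d_def by simp
  have "lam * (norm1 w + \<alpha> * norm w) - \<mu> * (norm w)\<^sup>2
      \<le> (lam * (sqrt d + \<alpha>)) * norm w - \<mu> * (norm w)\<^sup>2"
    using norm1_le_sqrt_card[of w] lam unfolding d_def by (simp add: algebra_simps)
  also have "\<dots> \<le> (lam * (sqrt d + \<alpha>))\<^sup>2 / (4 * \<mu>)" by (rule mult_sub_square_le[OF mu])
  also have "\<dots> \<le> (lam * ((1 + \<alpha>) * sqrt d))\<^sup>2 / (4 * \<mu>)"
  proof -
    have "\<alpha> * 1 \<le> \<alpha> * sqrt d" using alpha d1 by (intro mult_left_mono) auto
    then have "sqrt d + \<alpha> \<le> (1 + \<alpha>) * sqrt d" by (simp add: algebra_simps)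
    then have "lam * (sqrt d + \<alpha>) \<le> lam * ((1 + \<alpha>) * sqrt d)" using lam by simp
    moreover have "0 \<le> lam * (sqrt d + \<alpha>)" using lam alpha d1 by simp
    ultimately show ?thesis using mu by (intro divide_right_mono power_mono) auto
  qed
  also have "\<dots> = lam * ((1 + \<alpha>)\<^sup>2 * d * lam / (4 * \<mu>))"
    unfolding d_def by (simp add: power_mult_distrib power2_eq_square)
  also have "\<dots> \<le> lam * ((1 + \<alpha>)\<^sup>2 * d * lam / (2 * \<mu>))"
    using lam mu unfolding d_def by (intro mult_left_mono divide_left_mono) auto
  finally show ?thesis unfolding d_def .
qed

lemma minimizer_error_inequality:
  fixes A :: "real^'n^'m" and D :: "real^'d^'n"
  assumes DDt: "D ** transpose D = mat 1"
    and alpha: "0 \<le> \<alpha>" and lam: "lam > 0" and mu: "\<mu> > 0"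
    and b: "b = A *v x + e" and e: "norm e \<le> lam"
    and minimizer: "\<forall>x' z'. objective lam \<alpha> \<mu> A D b xh zh \<le> objective lam \<alpha> \<mu> A D b x' z'"
  shows "(norm (A *v (xh - x)))\<^sup>2 - lam * norm (A *v (xh - x)) \<le>
     lam * (norm1 (transpose D *v x) - norm1 (transpose D *v xh) + \<alpha> * norm (xh - x)
            + (1 + \<alpha>)\<^sup>2 * CARD('d) * lam / (2 * \<mu>))"
proof -
  define q where "q = A *v (xh - x)"
  define u where "u = transpose D *v x"
  define y where "y = transpose D *v xh"
  define w where "w = y - zh"
  have "(norm q)\<^sup>2 - lam * norm q \<le> inner (A *v xh - b) q"
  proof -
    have "inner e q \<le> lam * norm q"
      using norm_cauchy_schwarz[of e q] e by (smt (verit) mult_right_mono norm_ge_zero)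
    moreover have "A *v xh - b = q - e"
      unfolding q_def b by (simp add: matrix_vector_mult_diff_distrib)
    ultimately show ?thesis by (simp add: inner_diff_left power2_norm_eq_inner)
  qed
  also have "\<dots> \<le> lam * (norm1 u - norm1 zh + \<alpha> * norm (u - zh)) - \<mu> * (norm w)\<^sup>2"
    using minimizer_variational_inequality[OF alpha less_imp_le[OF lam] minimizer, of x]
    unfolding q_def u_def w_def y_def by simp
  also have "\<dots> \<le> lam * (norm1 u - norm1 y + \<alpha> * norm (xh - x)) + (lam * (norm1 w + \<alpha> * norm w) - \<mu> * (norm w)\<^sup>2)"
  proof -
    have "norm1 y \<le> norm1 zh + norm1 w" unfolding w_def using norm1_triangle[of zh "y - zh"] by simp
    moreover have "norm (u - y) = norm (xh - x)"
      using norm_transpose_tight_frame[OF DDt, of "x - xh"]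
      unfolding u_def y_def by (simp add: matrix_vector_mult_diff_distrib norm_minus_commute)
    then have "norm (u - zh) \<le> norm (xh - x) + norm w"
      using norm_triangle_ineq[of "u - y" "y - zh"] unfolding w_def by simp
    then have "\<alpha> * norm (u - zh) \<le> \<alpha> * (norm (xh - x) + norm w)" using alpha by (rule mult_left_mono)
    ultimately have "norm1 u - norm1 zh + \<alpha> * norm (u - zh) \<le> norm1 u - norm1 y + \<alpha> * norm (xh - x) + (norm1 w + \<alpha> * norm w)"
      by (simp add: algebra_simps)
    from mult_left_mono[OF this, of lam] lam show ?thesis by (simp add: algebra_simps)
  qed
  also have "\<dots> \<le> lam * (norm1 u - norm1 y + \<alpha> * norm (xh - x)) + lam * ((1 + \<alpha>)\<^sup>2 * CARD('d) * lam / (2 * \<mu>))"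
    using mismatch_term_le[OF alpha lam mu, of w] by simp
  finally show ?thesis unfolding q_def u_def y_def by (simp add: algebra_simps)
qed

definition largest_entries :: "'d set \<Rightarrow> real^'d \<Rightarrow> bool" where
  "largest_entries S v \<longleftrightarrow> (\<forall>i\<in>S. \<forall>j\<in>-S. \<bar>v $ j\<bar> \<le> \<bar>v $ i\<bar>)"

lemma exists_largest_entries:
  assumes "k \<le> CARD('d::finite)"
  obtains S where "card S = k" "largest_entries S (v::real^'d)"
  using exists_subset_of_largest[of k UNIV "\<lambda>i. v $ i"] assms
  unfolding largest_entries_def by (auto simp: Compl_eq_Diff_UNIV)

lemma sum_abs_le_largest_entries:
  assumes S: "largest_entries S v" and card: "card T = card S"
  shows "(\<Sum>i\<in>T. \<bar>v $ i\<bar>) \<le> (\<Sum>i\<in>S. \<bar>v $ i\<bar>)"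
proof -
  have cd: "card (T - S) = card (S - T)"
    using card by (simp add: card_Diff_subset_Int Int_commute)
  have "(\<Sum>i\<in>T - S. \<bar>v $ i\<bar>) \<le> (\<Sum>i\<in>S - T. \<bar>v $ i\<bar>)"
  proof (cases "S - T = {}")
    case True
    then have "T - S = {}" using cd by (metis card_0_eq finite)
    with True show ?thesis by simp
  next
    case False
    define m where "m = Min ((\<lambda>i. \<bar>v $ i\<bar>) ` (S - T))"
    have m_le: "\<And>i. i \<in> S - T \<Longrightarrow> m \<le> \<bar>v $ i\<bar>" unfolding m_def by auto
    have "m \<in> (\<lambda>i. \<bar>v $ i\<bar>) ` (S - T)" unfolding m_def using False by (intro Min_in) auto
    then have le_m: "\<And>j. j \<in> T - S \<Longrightarrow> \<bar>v $ j\<bar> \<le> m" using S unfolding largest_entries_def by auto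
    have "(\<Sum>i\<in>T - S. \<bar>v $ i\<bar>) \<le> (\<Sum>i\<in>T - S. m)" by (rule sum_mono) (rule le_m)
    also have "\<dots> = (\<Sum>i\<in>S - T. m)" using cd by simp
    also have "\<dots> \<le> (\<Sum>i\<in>S - T. \<bar>v $ i\<bar>)" by (rule sum_mono) (rule m_le)
    finally show ?thesis .
  qed
  moreover have "(\<Sum>i\<in>T. \<bar>v $ i\<bar>) = (\<Sum>i\<in>T - S. \<bar>v $ i\<bar>) + (\<Sum>i\<in>T \<inter> S. \<bar>v $ i\<bar>)"
    and "(\<Sum>i\<in>S. \<bar>v $ i\<bar>) = (\<Sum>i\<in>S - T. \<bar>v $ i\<bar>) + (\<Sum>i\<in>S \<inter> T. \<bar>v $ i\<bar>)"
    using sum.Int_Diff[of T "\<lambda>i. \<bar>v $ i\<bar>" S] sum.Int_Diff[of S "\<lambda>i. \<bar>v $ i\<bar>" T] by simp_all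
  ultimately show ?thesis by (simp add: Int_commute)
qed

lemma largest_entries_tail_le:
  assumes S: "largest_entries S v" "card S = s" "s > 0" and j: "j \<in> - S"
  shows "\<bar>v $ j\<bar> \<le> norm (vec_restrict S v) / sqrt s"
proof -
  have "(\<Sum>i\<in>S. (v $ j)\<^sup>2) \<le> (\<Sum>i\<in>S. (v $ i)\<^sup>2)"
    using S(1) j unfolding largest_entries_def by (intro sum_mono) (simp add: abs_le_square_iff)
  then have "s * (v $ j)\<^sup>2 \<le> (norm (vec_restrict S v))\<^sup>2"
    unfolding power2_norm_vec_restrict using S(2) by simp
  then have "(v $ j)\<^sup>2 \<le> (norm (vec_restrict S v) / sqrt s)\<^sup>2"
    using S(3) by (simp add: power_divide field_simps)
  then show ?thesis by (metis abs_le_square_iff abs_of_nonneg divide_nonneg_nonneg norm_ge_zero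
      real_sqrt_ge_zero of_nat_0_le_iff)
qed

lemma largest_entries_tail_energy:
  assumes S: "largest_entries S v" "card S = s" "s > 0"
  shows "(norm (vec_restrict (-S) v))\<^sup>2 \<le> norm (vec_restrict S v) / sqrt s * norm1 (vec_restrict (-S) v)"
proof -
  have "(norm (vec_restrict (-S) v))\<^sup>2 = (\<Sum>j\<in>-S. \<bar>v $ j\<bar> * \<bar>v $ j\<bar>)"
    unfolding power2_norm_vec_restrict by (simp add: power2_eq_square)
  also have "\<dots> \<le> (\<Sum>j\<in>-S. norm (vec_restrict S v) / sqrt s * \<bar>v $ j\<bar>)"
    using largest_entries_tail_le[OF S] by (intro sum_mono mult_right_mono) auto
  also have "\<dots> = norm (vec_restrict S v) / sqrt s * norm1 (vec_restrict (-S) v)"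
    unfolding norm1_vec_restrict by (simp add: sum_distrib_left)
  finally show ?thesis .
qed

lemma sum_UNIV_split_Compl: "(\<Sum>i\<in>UNIV. g i) = (\<Sum>i\<in>S. g i) + (\<Sum>i\<in>-S. (g i :: real))"
  for S :: "'d::finite set"
  by (metis Compl_eq_Diff_UNIV add.commute finite subset_UNIV sum.subset_diff)

lemma norm1_decrease_le:
  fixes u v :: "real^'d"
  shows "norm1 u - norm1 (u + v)
    \<le> 2 * norm1 (vec_restrict (-T) u) + (\<Sum>i\<in>T. \<bar>v $ i\<bar>) - (\<Sum>i\<in>-T. \<bar>v $ i\<bar>)"
proof -
  have "norm1 u - norm1 (u + v) = (\<Sum>i\<in>T. \<bar>u $ i\<bar> - \<bar>u $ i + v $ i\<bar>) + (\<Sum>i\<in>-T. \<bar>u $ i\<bar> - \<bar>u $ i + v $ i\<bar>)"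
    unfolding norm1_def sum_subtractf[symmetric] by (simp add: sum_UNIV_split_Compl)
  also have "\<dots> \<le> (\<Sum>i\<in>T. \<bar>v $ i\<bar>) + (\<Sum>i\<in>-T. 2 * \<bar>u $ i\<bar> - \<bar>v $ i\<bar>)"
    by (intro add_mono sum_mono) (auto simp: abs_if)
  also have "\<dots> = 2 * norm1 (vec_restrict (-T) u) + (\<Sum>i\<in>T. \<bar>v $ i\<bar>) - (\<Sum>i\<in>-T. \<bar>v $ i\<bar>)"
    by (simp add: norm1_vec_restrict sum_subtractf sum_distrib_left)
  finally show ?thesis .
qed

lemma norm1_Dcols: "norm1 (transpose (Dcols S D) *v x) = norm1 (vec_restrict S (transpose D *v x))"
proof -
  have "(transpose (Dcols S D) *v x) = vec_restrict S (transpose D *v x)"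
    by (simp add: vec_eq_iff Dcols_def transpose_def matrix_vector_mult_def)
  then show ?thesis by simp
qed

lemma le_of_quadratic_le:
  fixes y B C Y :: real
  assumes "y\<^sup>2 \<le> B * y + C" "0 \<le> B" "B \<le> Y" "C \<le> Y * (Y - B)"
  shows "y \<le> Y"
proof (rule ccontr)
  assume "\<not> y \<le> Y"
  then have "(y - Y) * (y + Y - B) > 0" using assms(2,3) by (intro mult_pos_pos) auto
  then have "y * (y - B) > Y * (Y - B)" by (simp add: algebra_simps)
  with assms(1,4) show False by (simp add: algebra_simps power2_eq_square)
qed

lemma quadratic_tail_estimate:
  fixes y a g r \<alpha> :: real
  assumes y: "y \<ge> 0" and a: "a \<ge> 0" and g: "g \<ge> 0" and r: "r \<ge> 1" and \<alpha>: "\<alpha> \<ge> 0"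
    and h: "y\<^sup>2 \<le> (a / r) * (r * a + \<alpha> * (a + y) + g)"
  shows "a + y \<le> (2 + (2 * \<alpha> + 1) / (2 * r)) * a + g / 2"
proof -
  define Y where "Y = a * (1 + (2 * \<alpha> + 1) / (2 * r)) + g / 2"
  have r0: "r > 0" using r by simp
  have "y \<le> Y"
  proof (rule le_of_quadratic_le)
    show "y\<^sup>2 \<le> (\<alpha> * a / r) * y + (a\<^sup>2 * (1 + \<alpha> / r) + a * g / r)"
      using h r0 by (simp add: field_simps power2_eq_square)
    show "0 \<le> \<alpha> * a / r" using \<alpha> a r0 by simp
    have "Y - \<alpha> * a / r = a * (1 + 1 / (2 * r)) + g / 2"
      unfolding Y_def using r0 by (simp add: field_simps)
    moreover have "a * (1 + 1 / (2 * r)) + g / 2 \<ge> 0" using a g r0 by simp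
    ultimately show "\<alpha> * a / r \<le> Y" by linarith
    have "Y * (Y - \<alpha> * a / r) = a\<^sup>2 * (1 + (\<alpha> + 1) / r + (2 * \<alpha> + 1) / (4 * r\<^sup>2))
        + a * g * (1 + (\<alpha> + 1) / (2 * r)) + g\<^sup>2 / 4"
      unfolding Y_def using r0 by (simp add: field_simps power2_eq_square)
    moreover have "a\<^sup>2 * (1 + \<alpha> / r) \<le> a\<^sup>2 * (1 + (\<alpha> + 1) / r + (2 * \<alpha> + 1) / (4 * r\<^sup>2))"
    proof (intro mult_left_mono)
      have "\<alpha> / r \<le> (\<alpha> + 1) / r" using r0 by (simp add: divide_right_mono)
      moreover have "(2 * \<alpha> + 1) / (4 * r\<^sup>2) \<ge> 0" using \<alpha> by simp
      ultimately show "1 + \<alpha> / r \<le> 1 + (\<alpha> + 1) / r + (2 * \<alpha> + 1) / (4 * r\<^sup>2)" by linarith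
    qed simp
    moreover have "a * g / r \<le> a * g * (1 + (\<alpha> + 1) / (2 * r))"
    proof -
      have "a * g * 1 \<le> a * g * r" using a g r by (intro mult_left_mono) auto
      then have "a * g / r \<le> a * g" using r0 by (simp add: divide_le_eq)
      also have "\<dots> \<le> a * g * (1 + (\<alpha> + 1) / (2 * r))"
        using mult_left_mono[of 1 "1 + (\<alpha> + 1) / (2 * r)" "a * g"] a g \<alpha> r0 by simp
      finally show ?thesis .
    qed
    ultimately show "a\<^sup>2 * (1 + \<alpha> / r) + a * g / r \<le> Y * (Y - \<alpha> * a / r)"
      by (smt (verit) zero_le_power2 divide_nonneg_pos)
  qed
  then show ?thesis unfolding Y_def by (simp add: algebra_simps)
qed

lemma K_closed_form:
  fixes s \<alpha> :: real
  assumes "s > 0" "\<alpha> \<ge> 0"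
  shows "sqrt ((\<alpha> + sqrt s) / sqrt s + \<alpha>\<^sup>2 / (4 * s)) + (\<alpha> + 1) / (2 * sqrt s) + 1
    = 2 + (2 * \<alpha> + 1) / (2 * sqrt s)"
proof -
  have r: "sqrt s > 0" using assms by simp
  have "(\<alpha> + sqrt s) / sqrt s + \<alpha>\<^sup>2 / (4 * s) = (1 + \<alpha> / (2 * sqrt s))\<^sup>2"
    using r assms by (simp add: field_simps power2_eq_square)
  moreover have "1 + \<alpha> / (2 * sqrt s) \<ge> 0" using r assms by simp
  ultimately have "sqrt ((\<alpha> + sqrt s) / sqrt s + \<alpha>\<^sup>2 / (4 * s)) = 1 + \<alpha> / (2 * sqrt s)" by simp
  then show ?thesis using r by (simp add: field_simps)
qed

lemma cone_inequality:
  fixes A :: "real^'n^'m" and D :: "real^'d^'n"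
  assumes DDt: "D ** transpose D = mat 1"
    and alpha: "0 \<le> \<alpha>" and lam: "lam > 0" and mu: "\<mu> > 0"
    and b: "b = A *v x + e" and e: "norm e \<le> lam"
    and minimizer: "\<forall>x' z'. objective lam \<alpha> \<mu> A D b xh zh \<le> objective lam \<alpha> \<mu> A D b x' z'"
    and W_def: "W = 2 * norm1 (transpose (Dcols (- T) D) *v x) + (\<alpha> + 1)\<^sup>2 * real CARD('d) / 2 * (lam / \<mu>)"
    and S: "largest_entries S (transpose D *v (xh - x))" and card: "card T = card S"
  defines "v \<equiv> transpose D *v (xh - x)" and "\<eta> \<equiv> norm (A *v (xh - x))"
  shows "\<eta>\<^sup>2 - lam * \<eta> \<le> lam * (W + norm1 (vec_restrict S v) - norm1 (vec_restrict (-S) v) + \<alpha> * norm (xh - x))"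
proof -
  define u where "u = transpose D *v x"
  have "transpose D *v xh = u + v"
    unfolding u_def v_def by (simp add: matrix_vector_mult_diff_distrib)
  then have "norm1 u - norm1 (transpose D *v xh)
      \<le> 2 * norm1 (vec_restrict (-T) u) + (\<Sum>i\<in>T. \<bar>v $ i\<bar>) - (\<Sum>i\<in>-T. \<bar>v $ i\<bar>)"
    using norm1_decrease_le[of u v T] by simp
  also have "\<dots> \<le> 2 * norm1 (vec_restrict (-T) u) + norm1 (vec_restrict S v) - norm1 (vec_restrict (-S) v)"
    using sum_abs_le_largest_entries[OF S card] norm1_split_Compl[of v T] norm1_split_Compl[of v S]
    unfolding norm1_vec_restrict v_def by linarith
  finally have "norm1 u - norm1 (transpose D *v xh) + (1 + \<alpha>)\<^sup>2 * CARD('d) * lam / (2 * \<mu>)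
      \<le> W + norm1 (vec_restrict S v) - norm1 (vec_restrict (-S) v)"
    unfolding W_def norm1_Dcols u_def by (simp add: field_simps)
  then show ?thesis
    using minimizer_error_inequality[OF DDt alpha lam mu b e minimizer] lam
    unfolding \<eta>_def u_def by (smt (verit) mult_left_mono)
qed

lemma recovery_error_bounds:
  fixes A :: "real^'n^'m" and D :: "real^'d^'n"
  assumes DDt: "D ** transpose D = mat 1"
    and alpha: "0 \<le> \<alpha>" "\<alpha> \<le> 1" and lam: "lam > 0" and mu: "\<mu> > 0"
    and b: "b = A *v x + e" and e: "norm e \<le> lam"
    and minimizer: "\<forall>x' z'. objective lam \<alpha> \<mu> A D b xh zh \<le> objective lam \<alpha> \<mu> A D b x' z'"
    and W_def: "W = 2 * norm1 (transpose (Dcols (- T) D) *v x) + (\<alpha> + 1)\<^sup>2 * real CARD('d) / 2 * (lam / \<mu>)"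
    and S: "largest_entries S (transpose D *v (xh - x))" "card S = s" "s \<ge> 1" and card: "card T = s"
  defines "v \<equiv> transpose D *v (xh - x)" and "\<eta> \<equiv> norm (A *v (xh - x))"
    and "K \<equiv> 2 + (2 * \<alpha> + 1) / (2 * sqrt s)"
  shows "norm (xh - x) \<le> K * norm (vec_restrict S v) + (W + \<eta>) / 2"
    and "norm1 (vec_restrict (-S) v) \<le> (sqrt s + \<alpha> * K) * norm (vec_restrict S v) + (1 + \<alpha> / 2) * (W + \<eta>)"
    and "\<eta>\<^sup>2 - lam * \<eta> \<le> lam * (W + (sqrt s + \<alpha>) * norm (vec_restrict S v))"
proof -
  define aS where "aS = norm (vec_restrict S v)"
  define \<Gamma> where "\<Gamma> = norm1 (vec_restrict (-S) v)"
  define y where "y = norm (vec_restrict (-S) v)"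
  define g where "g = W + \<eta>"
  have cone: "\<eta>\<^sup>2 - lam * \<eta> \<le> lam * (W + norm1 (vec_restrict S v) - \<Gamma> + \<alpha> * norm (xh - x))"
    using cone_inequality[OF DDt alpha(1) lam mu b e minimizer W_def S(1)] card S(2)
    unfolding \<Gamma>_def v_def \<eta>_def by simp
  have W0: "W \<ge> 0"
    unfolding W_def using lam mu norm1_nonneg[of "transpose (Dcols (- T) D) *v x"] by simp
  have g0: "g \<ge> 0" unfolding g_def \<eta>_def using W0 by simp
  have sqrt_s: "sqrt s \<ge> 1" using S(3) by simp
  have P: "norm1 (vec_restrict S v) \<le> sqrt s * aS"
    using norm1_vec_restrict_le[of S v] S(2) unfolding aS_def by simp
  have N: "norm (xh - x) \<le> aS + y"
    using norm_transpose_tight_frame[OF DDt, of "xh - x"] norm_triangle_ineq[of "vec_restrict S v" "vec_restrict (-S) v"]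
    unfolding aS_def y_def v_def by (simp add: vec_restrict_add_Compl)
  have \<Gamma>: "\<Gamma> \<le> norm1 (vec_restrict S v) + \<alpha> * norm (xh - x) + g"
  proof -
    have "lam * (- \<eta>) \<le> lam * (W + norm1 (vec_restrict S v) - \<Gamma> + \<alpha> * norm (xh - x))"
      using cone zero_le_power2[of \<eta>] by linarith
    then show ?thesis using lam unfolding g_def by (smt (verit) mult_left_le_imp_le)
  qed
  have tail: "y\<^sup>2 \<le> (aS / sqrt s) * (sqrt s * aS + \<alpha> * (aS + y) + g)"
  proof -
    have "y\<^sup>2 \<le> aS / sqrt s * \<Gamma>"
      using largest_entries_tail_energy[OF S(1,2)] S(3) unfolding y_def aS_def \<Gamma>_def v_def by simp
    also have "\<dots> \<le> (aS / sqrt s) * (sqrt s * aS + \<alpha> * (aS + y) + g)"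
      using \<Gamma> P mult_left_mono[OF N alpha(1)] unfolding aS_def by (intro mult_left_mono) auto
    finally show ?thesis .
  qed
  have "aS + y \<le> K * aS + g / 2"
    unfolding K_def by (rule quadratic_tail_estimate[OF _ _ g0 sqrt_s alpha(1) tail]) (auto simp: y_def aS_def)
  with N show R1: "norm (xh - x) \<le> K * aS + (W + \<eta>) / 2" unfolding g_def by linarith
  show "\<Gamma> \<le> (sqrt s + \<alpha> * K) * aS + (1 + \<alpha> / 2) * (W + \<eta>)"
    using \<Gamma> P mult_left_mono[OF R1 alpha(1)] unfolding g_def by (simp add: algebra_simps)
  have "\<alpha> * norm (xh - x) \<le> \<alpha> * aS + \<Gamma>"
  proof -
    have "\<alpha> * norm (xh - x) \<le> \<alpha> * (aS + \<Gamma>)"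
      using N norm_le_norm1[of "vec_restrict (-S) v"] alpha(1) unfolding y_def \<Gamma>_def
      by (intro mult_left_mono) auto
    also have "\<dots> \<le> \<alpha> * aS + \<Gamma>"
      using alpha norm1_nonneg[of "vec_restrict (-S) v"] unfolding \<Gamma>_def by (simp add: distrib_left mult_left_le_one_le)
    finally show ?thesis .
  qed
  then have "W + norm1 (vec_restrict S v) - \<Gamma> + \<alpha> * norm (xh - x) \<le> W + (sqrt s + \<alpha>) * aS"
    using P by (simp add: algebra_simps)
  then show "\<eta>\<^sup>2 - lam * \<eta> \<le> lam * (W + (sqrt s + \<alpha>) * aS)"
    using cone lam by (smt (verit) mult_left_mono)
qed

lemma sqrt_2_bounds: "sqrt 2 \<ge> 7/5" "sqrt 2 \<le> 10/7" "sqrt (2::real) > 0"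
proof -
  show "sqrt 2 \<ge> 7/5" by (rule real_le_rsqrt) (simp add: power2_eq_square)
  have "sqrt (2::real) \<le> sqrt ((10/7)\<^sup>2)" by (intro real_sqrt_le_mono) (simp add: power2_eq_square)
  then show "sqrt 2 \<le> 10/7" by simp
  show "sqrt (2::real) > 0" by simp
qed

lemma sqrt_nat_ge_7_5: "2 \<le> s \<Longrightarrow> 7/5 \<le> sqrt (real s)"
proof -
  assume "2 \<le> s"
  then have "sqrt 2 \<le> sqrt (real s)" by simp
  with sqrt_2_bounds(1) show ?thesis by linarith
qed

lemma sqrt_2_ratio_ge: "(sqrt 2 + 1) / sqrt 2 \<ge> (17/10::real)"
proof -
  have q: "sqrt (2::real) > 0" "sqrt (2::real) \<le> 10/7" using sqrt_2_bounds by auto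
  then have "17/10 * sqrt 2 \<le> sqrt 2 + 1" by linarith
  then show ?thesis using q by (simp add: le_divide_eq)
qed

lemma rho_coeff_polynomial_ineq:
  fixes r \<alpha> :: real
  assumes r: "r \<ge> 7/5" and al: "0 < \<alpha>" "\<alpha> \<le> 1"
  shows "(r - 1) * (5/4 * r\<^sup>2 + \<alpha> * (2 * r + \<alpha> + 1/2)) \<le> 17/10 * (r + \<alpha>) * r\<^sup>2"
proof -
  have "17/10 * (r + \<alpha>) * r\<^sup>2 - (r - 1) * (5/4 * r\<^sup>2 + \<alpha> * (2 * r + \<alpha> + 1/2))
    = (45/100 * r^3 - 3/10 * \<alpha> * r\<^sup>2) + (5/4 * r\<^sup>2 - \<alpha>\<^sup>2 * r) + (3/2 * \<alpha> * r + \<alpha>\<^sup>2 + \<alpha> / 2)"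
    by (simp add: field_simps power2_eq_square power3_eq_cube)
  moreover have "3/10 * \<alpha> * r\<^sup>2 \<le> 45/100 * r^3"
  proof -
    have "3/10 * \<alpha> * r\<^sup>2 \<le> 3/10 * 1 * r\<^sup>2" using al by (intro mult_right_mono) auto
    also have "\<dots> \<le> 45/100 * r^3" using r by (simp add: power2_eq_square power3_eq_cube mult_right_mono)
    finally show ?thesis .
  qed
  moreover have "\<alpha>\<^sup>2 * r \<le> 5/4 * r\<^sup>2"
  proof -
    have "\<alpha>\<^sup>2 * r \<le> 1 * r" using al r by (intro mult_right_mono) (auto simp: power_le_one)
    also have "\<dots> \<le> 5/4 * r\<^sup>2" using r by (simp add: power2_eq_square)
    finally show ?thesis .
  qed
  moreover have "3/2 * \<alpha> * r + \<alpha>\<^sup>2 + \<alpha> / 2 \<ge> 0" using al r by simp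
  ultimately show ?thesis by linarith
qed

lemma order_s_rho_coeff_ge:
  fixes r \<alpha> :: real
  assumes r: "r \<ge> 7/5" and al: "0 < \<alpha>" "\<alpha> \<le> 1"
  shows "(sqrt 2 + 1) * (r + \<alpha>) / (sqrt 2 * (r - 1)) \<ge> 5/4 + \<alpha> * (2 + (2 * \<alpha> + 1) / (2 * r)) / r"
proof -
  have r1: "r - 1 > 0" "r > 0" using r by auto
  note poly = rho_coeff_polynomial_ineq[OF r al]
  have "5/4 + \<alpha> * (2 + (2 * \<alpha> + 1) / (2 * r)) / r = (5/4 * r\<^sup>2 + \<alpha> * (2 * r + \<alpha> + 1/2)) / r\<^sup>2"
    using r1 by (simp add: field_simps power2_eq_square)
  also have "\<dots> \<le> 17/10 * (r + \<alpha>) / (r - 1)"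
  proof -
    define n where "n = 5/4 * r\<^sup>2 + \<alpha> * (2 * r + \<alpha> + 1/2)"
    have r2p: "r\<^sup>2 > 0" using r1 by simp
    have "(n * (r - 1)) / r\<^sup>2 \<le> 17/10 * (r + \<alpha>)"
      using poly r2p unfolding n_def by (simp add: pos_divide_le_eq mult.commute)
    then have "n / r\<^sup>2 * (r - 1) \<le> 17/10 * (r + \<alpha>)" by simp
    then show ?thesis unfolding n_def[symmetric] using r1 by (subst pos_le_divide_eq) auto
  qed
  also have "\<dots> = 17/10 * ((r + \<alpha>) / (r - 1))" by simp
  also have "\<dots> \<le> (sqrt 2 + 1) / sqrt 2 * ((r + \<alpha>) / (r - 1))"
  proof -
    have "(r + \<alpha>) / (r - 1) \<ge> 0" using r1 al by simp
    then show ?thesis by (rule mult_right_mono[OF sqrt_2_ratio_ge])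
  qed
  also have "\<dots> = (sqrt 2 + 1) * (r + \<alpha>) / (sqrt 2 * (r - 1))" by simp
  finally show ?thesis .
qed

lemma order_s_tau_coeff_ge:
  fixes r \<alpha> :: real
  assumes r: "r \<ge> 7/5" and al: "0 < \<alpha>" "\<alpha> \<le> 1"
  shows "(sqrt 2 + 1) / (sqrt 2 * (r - 1)) \<ge> (1 + \<alpha> / 2) / r"
proof -
  have r1: "r - 1 > 0" "r > 0" using r by auto
  have "(1 + \<alpha> / 2) / r \<le> (3/2) / r" using divide_right_mono[of "1 + \<alpha> / 2" "3/2" r] al r1 by simp
  also have "\<dots> \<le> (17/10) / (r - 1)" using r1 by (simp add: field_simps)
  also have "\<dots> \<le> ((sqrt 2 + 1) / sqrt 2) / (r - 1)" by (rule divide_right_mono[OF sqrt_2_ratio_ge]) (use r1 in simp)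
  also have "\<dots> = (sqrt 2 + 1) / (sqrt 2 * (r - 1))" by simp
  finally show ?thesis .
qed

lemma order_ts_rho_coeff_ge:
  fixes r \<alpha> k t s :: real
  assumes r: "r = sqrt s" "s \<ge> 2" and al: "0 < \<alpha>" "\<alpha> \<le> 1" and t: "t \<ge> 3" and k: "k \<ge> (t - 1) * s"
  shows "sqrt (k / ((t - 1)\<^sup>2 * s)) * ((sqrt 2 + 1) * (r + \<alpha>) / (sqrt 2 * (r - 1)))
     \<ge> (r + \<alpha> * (2 + (2 * \<alpha> + 1) / (2 * r))) / sqrt k"
proof -
  define Z where "Z = (sqrt 2 + 1) * (r + \<alpha>) / (sqrt 2 * (r - 1))"
  define K0 where "K0 = 2 + (2 * \<alpha> + 1) / (2 * r)"
  have r2: "r \<ge> sqrt 2" using r by simp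
  then have r75: "r \<ge> 7/5" using sqrt_2_bounds by linarith
  have r0: "r > 0" using r75 by simp
  have s0: "s > 0" using r by simp
  have rr: "r\<^sup>2 = s" using r s0 by simp
  have t1: "t - 1 > 0" using t by simp
  have kpos: "k > 0" using k t1 s0 by (smt (verit) mult_pos_pos)
  have Z1: "Z \<ge> 1 + \<alpha> * K0 / r"
    using order_s_rho_coeff_ge[OF r75 al] unfolding Z_def K0_def by linarith
  have sk: "sqrt k > 0" using kpos by simp
  have sq: "sqrt (k / ((t - 1)\<^sup>2 * s)) = sqrt k / ((t - 1) * r)"
    using t1 r s0 by (simp add: real_sqrt_divide real_sqrt_mult)
  have "(r + \<alpha> * K0) / sqrt k = (t - 1) * r * (r + \<alpha> * K0) / (sqrt k * ((t - 1) * r))"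
    using t1 r0 sk by (simp add: field_simps)
  also have "(t - 1) * r * (r + \<alpha> * K0) = (t - 1) * r\<^sup>2 * (1 + \<alpha> * K0 / r)"
    using r0 by (simp add: field_simps power2_eq_square)
  also have "\<dots> \<le> k * Z"
  proof -
    have "(t - 1) * r\<^sup>2 * (1 + \<alpha> * K0 / r) \<le> k * (1 + \<alpha> * K0 / r)"
      using k rr t1 al r0 by (intro mult_right_mono) (auto simp: K0_def)
    also have "\<dots> \<le> k * Z" using Z1 kpos by (intro mult_left_mono) auto
    finally show ?thesis .
  qed
  finally have "(r + \<alpha> * K0) / sqrt k \<le> k * Z / (sqrt k * ((t - 1) * r))"
    using sk t1 r0 by (simp add: divide_right_mono)
  also have "k * Z / (sqrt k * ((t - 1) * r)) = sqrt k / ((t - 1) * r) * Z"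
    using kpos sk t1 r0 by (simp add: field_simps)
  finally show ?thesis unfolding sq Z_def K0_def .
qed

lemma order_ts_tau_coeff_ge:
  fixes r \<alpha> k t s :: real
  assumes r: "r = sqrt s" "s \<ge> 2" and al: "0 < \<alpha>" "\<alpha> \<le> 1" and t: "t \<ge> 3" and k: "k \<ge> (t - 1) * s"
  shows "sqrt ((t - 1) * s) / ((t - 1) * (s - r)) * ((sqrt 2 + 1) / sqrt 2) \<ge> (1 + \<alpha> / 2) / sqrt k"
proof -
  have r2: "r \<ge> sqrt 2" using r by simp
  then have r75: "r \<ge> 7/5" using sqrt_2_bounds by linarith
  have r0: "r > 1" using r75 by simp
  have s0: "s > 0" using r by simp
  have rr: "r * r = s" using r s0 by simp
  have t1: "t - 1 > 0" using t by simp
  have st: "sqrt (t - 1) > 0" using t1 by simp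
  have e: "sqrt ((t - 1) * s) / ((t - 1) * (s - r)) * ((sqrt 2 + 1) / sqrt 2)
     = ((sqrt 2 + 1) / (sqrt 2 * (r - 1))) / sqrt (t - 1)"
  proof -
    define u where "u = sqrt (t - 1)"
    have A1: "sqrt ((t - 1) * s) = u * r" using r unfolding u_def by (simp add: real_sqrt_mult)
    have A2: "t - 1 = u * u" using t1 unfolding u_def by simp
    have A3: "s - r = r * (r - 1)" using rr by (simp add: algebra_simps)
    have u0: "u > 0" using st unfolding u_def .
    have "sqrt ((t - 1) * s) / ((t - 1) * (s - r)) = (u * r) / ((u * u) * (r * (r - 1)))"
      by (simp only: A1 A3) (simp only: A2)
    also have "\<dots> = 1 / (u * (r - 1))" using u0 r0 by (simp add: field_simps)
    finally have X: "sqrt ((t - 1) * s) / ((t - 1) * (s - r)) = 1 / (u * (r - 1))" .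
    have "sqrt ((t - 1) * s) / ((t - 1) * (s - r)) * ((sqrt 2 + 1) / sqrt 2) = 1 / (u * (r - 1)) * ((sqrt 2 + 1) / sqrt 2)"
      by (simp only: X)
    also have "\<dots> = ((sqrt 2 + 1) / (sqrt 2 * (r - 1))) / u" using u0 r0 by (simp add: field_simps)
    finally show ?thesis unfolding u_def .
  qed
  have "sqrt k \<ge> sqrt ((t - 1) * s)" using k by simp
  also have "sqrt ((t - 1) * s) = sqrt (t - 1) * r" using r by (simp add: real_sqrt_mult)
  finally have skr: "sqrt k \<ge> sqrt (t - 1) * r" .
  have pr: "sqrt (t - 1) * r > 0" using st r0 by simp
  have skp: "sqrt k > 0" using skr pr by linarith
  have "(1 + \<alpha> / 2) / sqrt k \<le> (1 + \<alpha> / 2) / (sqrt (t - 1) * r)"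
    using skr pr al skp by (intro divide_left_mono) auto
  also have "\<dots> = ((1 + \<alpha> / 2) / r) / sqrt (t - 1)" by simp
  also have "\<dots> \<le> ((sqrt 2 + 1) / (sqrt 2 * (r - 1))) / sqrt (t - 1)"
    by (rule divide_right_mono[OF order_s_tau_coeff_ge[OF r75 al]]) (use st in simp)
  finally show ?thesis unfolding e .
qed

lemma le_of_rip_inequality:
  fixes a g \<eta> \<delta> \<theta> c1 c2 \<rho> \<tau> :: real
  assumes rip: "(1 - \<delta>) * a \<le> sqrt (1 + \<delta>) * \<eta> + \<theta> * (c1 * a + c2 * g)"
    and a: "a \<ge> 0" and g: "g \<ge> 0" and rho: "\<delta> + \<theta> * c1 \<le> \<rho>" "\<rho> < 1"
    and tau: "\<theta> * c2 / (1 - \<rho>) \<le> \<tau>"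
  shows "a \<le> \<tau> * g + sqrt (1 + \<delta>) / (1 - \<rho>) * \<eta>"
proof -
  have r1: "1 - \<rho> > 0" using rho by simp
  have "(1 - \<rho>) * a \<le> (1 - \<delta> - \<theta> * c1) * a" using rho a by (intro mult_right_mono) auto
  also have "\<dots> \<le> sqrt (1 + \<delta>) * \<eta> + \<theta> * c2 * g" using rip by (simp add: algebra_simps)
  finally have "a \<le> (sqrt (1 + \<delta>) * \<eta> + \<theta> * c2 * g) / (1 - \<rho>)" using r1 by (simp add: field_simps)
  also have "\<dots> = \<theta> * c2 / (1 - \<rho>) * g + sqrt (1 + \<delta>) / (1 - \<rho>) * \<eta>" by (simp add: add_divide_distrib)
  also have "\<dots> \<le> \<tau> * g + sqrt (1 + \<delta>) / (1 - \<rho>) * \<eta>"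
    using mult_right_mono[OF tau g] by (rule add_right_mono)
  finally show ?thesis .
qed

lemma err_bound_expand:
  fixes K \<tau> sd r C Q P W l :: real
  assumes "r \<noteq> 0" "Q \<noteq> 0"
  shows "(K * \<tau> + 1/2) * W + (K * \<tau> + K * (sd / r) + 1/2) * (C * r * W / Q + 2 * l * (C + P * (sd / r)))
    = (K * (\<tau> + (\<tau> * r + sd) * C / Q) + 1/2 * (1 + C * r / Q)) * W
      + (K * (\<tau> * r + sd) / r + 1/2) * (C + P * sd / r) * 2 * l"
  using assms by (simp add: field_simps)

lemma err_bound_of_estimates:
  fixes N a \<eta> W l K \<tau> c1 c2 C \<rho> \<delta> \<theta> Q s \<alpha> :: real
  assumes N: "N \<le> K * a + (W + \<eta>) / 2"
    and quad: "\<eta>\<^sup>2 - l * \<eta> \<le> l * (W + (sqrt s + \<alpha>) * a)"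
    and rip: "(1 - \<delta>) * a \<le> sqrt (1 + \<delta>) * \<eta> + \<theta> * (c1 * a + c2 * (W + \<eta>))"
    and rho: "\<delta> + \<theta> * c1 \<le> \<rho>" "\<rho> < 1" and tau: "\<theta> * c2 / (1 - \<rho>) \<le> \<tau>"
    and C: "C = 1 + (sqrt s + \<alpha>) * \<tau>" and Q: "Q = C * (1 - \<rho>) + (sqrt s + \<alpha>) * sqrt (1 + \<delta>)"
    and nonneg: "sqrt s + \<alpha> \<ge> 0" "\<delta> \<ge> 0" "\<theta> \<ge> 0" "c2 \<ge> 0" "K \<ge> 0" "W \<ge> 0" "\<eta> \<ge> 0" "a \<ge> 0"
    and l: "l > 0"
  shows "N \<le> err_bound s \<alpha> l K W \<rho> \<delta> \<tau> C Q"
proof -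
  define P where "P = sqrt s + \<alpha>"
  define c where "c = sqrt (1 + \<delta>) / (1 - \<rho>)"
  define B where "B = C + P * c"
  have r1: "1 - \<rho> > 0" using rho by simp
  have c0: "c \<ge> 0" unfolding c_def using r1 nonneg(2) by simp
  have tau0: "\<tau> \<ge> 0" using tau nonneg r1 by (smt (verit) divide_nonneg_pos mult_nonneg_nonneg)
  have C1: "C \<ge> 1" using C nonneg tau0 by simp
  have B0: "B > 0" unfolding B_def P_def using C1 nonneg c0 by (smt (verit) mult_nonneg_nonneg)
  have a_le: "a \<le> \<tau> * (W + \<eta>) + c * \<eta>"
    unfolding c_def by (rule le_of_rip_inequality[OF rip nonneg(8) _ rho tau]) (use nonneg in simp)
  have "\<eta> \<le> l * B + C * W / B"
  proof (rule le_of_quadratic_le)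
    have "P * a \<le> P * (\<tau> * (W + \<eta>) + c * \<eta>)" using a_le nonneg(1) unfolding P_def by (rule mult_left_mono)
    then have "\<eta>\<^sup>2 - l * \<eta> \<le> l * (W + P * (\<tau> * (W + \<eta>) + c * \<eta>))"
      using quad l unfolding P_def by (smt (verit) mult_left_mono)
    then show "\<eta>\<^sup>2 \<le> l * B * \<eta> + l * (C * W)" unfolding B_def C P_def by (simp add: algebra_simps)
    show "0 \<le> l * B" "l * B \<le> l * B + C * W / B" using l B0 C1 nonneg by auto
    show "l * (C * W) \<le> (l * B + C * W / B) * (l * B + C * W / B - l * B)"
      using B0 C1 nonneg l by (simp add: field_simps)
  qed
  moreover have BQ: "B * (1 - \<rho>) = Q" unfolding B_def Q c_def P_def using r1 by (simp add: field_simps)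
  moreover have "C * W / B = C * (1 - \<rho>) * W / Q" unfolding BQ[symmetric] using r1 by simp
  moreover have "l * B > 0" using l B0 by simp
  ultimately have \<eta>_le: "\<eta> \<le> C * (1 - \<rho>) * W / Q + 2 * l * B" by linarith
  have "N \<le> (K * \<tau> + 1/2) * W + (K * \<tau> + K * c + 1/2) * \<eta>"
    using N mult_left_mono[OF a_le nonneg(5)] by (simp add: algebra_simps add_divide_distrib)
  also have "\<dots> \<le> (K * \<tau> + 1/2) * W + (K * \<tau> + K * c + 1/2) * (C * (1 - \<rho>) * W / Q + 2 * l * B)"
    using \<eta>_le nonneg tau0 c0 by (intro add_left_mono mult_left_mono) auto
  also have "\<dots> = err_bound s \<alpha> l K W \<rho> \<delta> \<tau> C Q"
  proof -
    have "Q > 0" using BQ B0 r1 by (metis mult_pos_pos)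
    then show ?thesis
      using err_bound_expand[of "1 - \<rho>" Q K \<tau> W "sqrt (1 + \<delta>)" C l P] r1
      unfolding err_bound_def B_def c_def P_def by simp
  qed
  finally show ?thesis .
qed

lemma error_bound_order_s:
  fixes A :: "real^'n^'m" and D :: "real^'d^'n" and s :: nat and xh x :: "real^'n"
  assumes DDt: "D ** transpose D = mat 1"
    and alpha: "0 < \<alpha>" "\<alpha> \<le> 1" and lam: "lam > 0" and s: "s \<ge> 2" and W0: "W \<ge> 0"
    and K: "K = 2 + (2 * \<alpha> + 1) / (2 * sqrt s)"
    and S: "largest_entries S (transpose D *v (xh - x))" "card S = s"
  defines "v \<equiv> transpose D *v (xh - x)" and "\<eta> \<equiv> norm (A *v (xh - x))"
  assumes R1: "norm (xh - x) \<le> K * norm (vec_restrict S v) + (W + \<eta>) / 2"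
    and R2: "norm1 (vec_restrict (-S) v) \<le> (sqrt s + \<alpha> * K) * norm (vec_restrict S v) + (1 + \<alpha> / 2) * (W + \<eta>)"
    and R3: "\<eta>\<^sup>2 - lam * \<eta> \<le> lam * (W + (sqrt s + \<alpha>) * norm (vec_restrict S v))"
  shows
     "let \<delta> = DRIC A D s;
          \<theta> = DROC A D s s;
          \<rho> = \<delta> + (sqrt 2 + 1) * (sqrt s + \<alpha>) / (sqrt 2 * (sqrt s - 1)) * \<theta>
      in \<rho> < 1 \<longrightarrow>
        (let \<tau> = (sqrt 2 + 1) * \<theta> / (sqrt 2 * (1 - \<rho>)) * (1 / (sqrt s - 1));
             C = 1 + (sqrt 2 + 1) * \<theta> / (sqrt 2 * (1 - \<rho>)) * ((sqrt s + \<alpha>) / (sqrt s - 1));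
             Q = C * (1 - \<rho>) + (sqrt s + \<alpha>) * sqrt (1 + \<delta>)
         in norm (xh - x) \<le> err_bound s \<alpha> lam K W \<rho> \<delta> \<tau> C Q)"
  unfolding Let_def
proof
  define \<delta> \<theta> where "\<delta> = DRIC A D s" and "\<theta> = DROC A D s s"
  define r where "r = sqrt (real s)"
  define \<rho> where "\<rho> = \<delta> + (sqrt 2 + 1) * (r + \<alpha>) / (sqrt 2 * (r - 1)) * \<theta>"
  define aS \<Gamma> where "aS = norm (vec_restrict S v)" and "\<Gamma> = norm1 (vec_restrict (-S) v)"
  assume \<rho>1: "\<rho> < 1"
  have r75: "r \<ge> 7/5" unfolding r_def using s by (rule sqrt_nat_ge_7_5)
  have \<theta>0: "\<theta> \<ge> 0" unfolding \<theta>_def by (rule DROC_nonneg[OF DDt])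
  have K0: "K \<ge> 0" unfolding K using alpha by simp
  have "(1 - \<delta>) * aS \<le> sqrt (1 + \<delta>) * \<eta> + \<theta> * (\<Gamma> / r + r * (aS / r) / 4)"
    using DRIC_DROC_restricted_bound[OF DDt, where H=S and kH=s and k=s and M="aS / r" and A=A and h="xh - x"]
      largest_entries_tail_le[OF S] S s r75
    unfolding \<delta>_def \<theta>_def aS_def \<Gamma>_def v_def \<eta>_def r_def by simp
  also have "\<Gamma> / r + r * (aS / r) / 4 \<le> (5/4 + \<alpha> * K / r) * aS + ((1 + \<alpha> / 2) / r) * (W + \<eta>)"
  proof -
    have "\<Gamma> / r \<le> ((r + \<alpha> * K) * aS + (1 + \<alpha> / 2) * (W + \<eta>)) / r"
      using divide_right_mono[OF R2, of r] r75 unfolding \<Gamma>_def aS_def r_def by simp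
    also have "\<dots> = (1 + \<alpha> * K / r) * aS + ((1 + \<alpha> / 2) / r) * (W + \<eta>)"
      using r75 by (simp add: field_simps)
    finally show ?thesis using r75 by (simp add: algebra_simps)
  qed
  finally have rip: "(1 - \<delta>) * aS \<le> sqrt (1 + \<delta>) * \<eta> + \<theta> * ((5/4 + \<alpha> * K / r) * aS + ((1 + \<alpha> / 2) / r) * (W + \<eta>))"
    using \<theta>0 by (smt (verit) mult_left_mono)
  define \<tau> where "\<tau> = (sqrt 2 + 1) * \<theta> / (sqrt 2 * (1 - \<rho>)) * (1 / (r - 1))"
  define C where "C = 1 + (sqrt 2 + 1) * \<theta> / (sqrt 2 * (1 - \<rho>)) * ((r + \<alpha>) / (r - 1))"
  define Q where "Q = C * (1 - \<rho>) + (r + \<alpha>) * sqrt (1 + \<delta>)"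
  show "norm (xh - x) \<le> err_bound s \<alpha> lam K W \<rho> \<delta> \<tau> C Q"
  proof (rule err_bound_of_estimates[OF R1[folded aS_def] R3[folded aS_def] rip])
    show "\<delta> + \<theta> * (5/4 + \<alpha> * K / r) \<le> \<rho>"
      using order_s_rho_coeff_ge[OF r75 alpha] \<theta>0 unfolding \<rho>_def K r_def
      by (smt (verit) mult.commute mult_left_mono)
    show "\<rho> < 1" by (rule \<rho>1)
    have "\<theta> / (1 - \<rho>) * ((1 + \<alpha> / 2) / r) \<le> \<theta> / (1 - \<rho>) * ((sqrt 2 + 1) / (sqrt 2 * (r - 1)))"
      using order_s_tau_coeff_ge[OF r75 alpha] \<theta>0 \<rho>1 unfolding r_def by (intro mult_left_mono) auto
    then show "\<theta> * ((1 + \<alpha> / 2) / r) / (1 - \<rho>) \<le> \<tau>" unfolding \<tau>_def by (simp add: field_simps)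
    show "C = 1 + (sqrt s + \<alpha>) * \<tau>" unfolding C_def \<tau>_def r_def by (simp add: field_simps)
  qed (use alpha lam W0 K0 \<theta>0 r75 DRIC_nonneg in \<open>auto simp: r_def aS_def \<eta>_def Q_def \<delta>_def\<close>)
qed

text \<open>\<open>H\<close> is \<open>S\<close> together with the \<open>k\<close> largest entries of \<open>D\<^sup>T h\<close> off \<open>S\<close>; the entries outside \<open>H\<close> are
  then bounded by the mean \<open>n\<^sub>1 / k\<close> of those \<open>k\<close> entries, which pays for the spread term.\<close>

lemma DRIC_DROC_extended_bound:
  fixes A :: "real^'n^'m" and D :: "real^'d^'n" and h :: "real^'n"
  assumes DDt: "D ** transpose D = mat 1" and S: "card S = s" and k: "k > 0"
  defines "v \<equiv> transpose D *v h"
  obtains H where "S \<subseteq> H"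
    "(1 - DRIC A D (s + k)) * norm (vec_restrict H v)
      \<le> sqrt (1 + DRIC A D (s + k)) * norm (A *v h) + DROC A D (s + k) k * (norm1 (vec_restrict (-S) v) / sqrt k)"
proof -
  define \<delta> \<theta> where "\<delta> = DRIC A D (s + k)" and "\<theta> = DROC A D (s + k) k"
  have \<theta>0: "\<theta> \<ge> 0" unfolding \<theta>_def by (rule DROC_nonneg[OF DDt])
  have sk: "sqrt k > 0" using k by simp
  show ?thesis
  proof (cases "k \<le> card (-S)")
    case True
    then obtain B where B: "B \<subseteq> -S" "card B = k" "\<forall>i\<in>B. \<forall>j\<in>-S-B. \<bar>v$j\<bar> \<le> \<bar>v$i\<bar>"
      using exists_subset_of_largest[of k "-S" "\<lambda>i. v$i"] by auto
    define n1 where "n1 = norm1 (vec_restrict B v)"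
    have n10: "n1 \<ge> 0" unfolding n1_def by (rule norm1_nonneg)
    have cardH: "card (S \<union> B) = s + k" using B S by (subst card_Un_disjoint) auto
    have mH: "-(S \<union> B) = -S - B" by auto
    have M: "\<forall>j\<in>-(S \<union> B). \<bar>v$j\<bar> \<le> n1 / k"
    proof
      fix j assume j: "j \<in> -(S \<union> B)"
      have "(\<Sum>i\<in>B. \<bar>v$j\<bar>) \<le> (\<Sum>i\<in>B. \<bar>v$i\<bar>)"
        by (rule sum_mono) (use B(3) j mH in auto)
      then have "k * \<bar>v$j\<bar> \<le> n1" unfolding n1_def norm1_vec_restrict using B(2) by simp
      then show "\<bar>v$j\<bar> \<le> n1 / k" using k by (simp add: le_divide_eq mult.commute)
    qed
    have tail: "norm1 (vec_restrict (-(S \<union> B)) v) = norm1 (vec_restrict (-S) v) - n1"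
      unfolding mH n1_def norm1_vec_restrict using B(1) by (simp add: sum.subset_diff)
    have "(1 - \<delta>) * norm (vec_restrict (S \<union> B) v) \<le> sqrt (1 + \<delta>) * norm (A *v h) +
        \<theta> * (norm1 (vec_restrict (-(S \<union> B)) v) / sqrt k + sqrt k * (n1 / k) / 4)"
      using DRIC_DROC_restricted_bound[OF DDt, where H="S \<union> B" and kH="s + k" and k=k and M="n1 / k" and A=A]
        cardH k n10 M unfolding \<delta>_def \<theta>_def v_def by simp
    also have "norm1 (vec_restrict (-(S \<union> B)) v) / sqrt k + sqrt k * (n1 / k) / 4
        \<le> norm1 (vec_restrict (-S) v) / sqrt k"
    proof -
      have "sqrt k * (n1 / k) = n1 / sqrt k" using sk by (simp add: field_simps)
      then show ?thesis unfolding tail using n10 sk by (simp add: field_simps)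
    qed
    finally show ?thesis
      using that[of "S \<union> B"] \<theta>0 unfolding \<delta>_def \<theta>_def by (smt (verit) mult_left_mono sup_ge1)
  next
    case False
    have "card (UNIV :: 'd set) = card S + card (-S)"
      by (metis Compl_partition card_Un_disjoint finite Compl_disjoint)
    then have "card (UNIV :: 'd set) \<le> s + k" using S False by simp
    then have "(1 - \<delta>) * norm (vec_restrict UNIV v) \<le> sqrt (1 + \<delta>) * norm (A *v h)"
      using DRIC_DROC_restricted_bound[OF DDt, where H=UNIV and kH="s + k" and k=k and M=0 and A=A] k
      unfolding \<delta>_def \<theta>_def v_def by (simp add: norm1_vec_restrict)
    then show ?thesis
      using that[of UNIV] \<theta>0 sk norm1_nonneg[of "vec_restrict (-S) v"] unfolding \<delta>_def \<theta>_def
      by (smt (verit) divide_nonneg_pos mult_nonneg_nonneg subset_UNIV)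
  qed
qed

lemma ceiling_order_split:
  fixes t :: real and s :: nat
  assumes t: "t \<ge> 3" and s: "s \<ge> 2"
  defines "k \<equiv> nat \<lceil>(t - 1) * s\<rceil>"
  shows "real k = real_of_int \<lceil>(t - 1) * s\<rceil>" "real k \<ge> (t - 1) * s" "k > 0"
    and "nat \<lceil>t * s\<rceil> = s + k"
proof -
  have pos: "(t - 1) * real s > 0" using t s by simp
  then show k: "real k = real_of_int \<lceil>(t - 1) * s\<rceil>" unfolding k_def by simp
  then show kge: "real k \<ge> (t - 1) * s" by simp
  with pos show "k > 0" by linarith
  have "t * real s = (t - 1) * real s + real_of_int (int s)" by (simp add: algebra_simps)
  then have "\<lceil>t * real s\<rceil> = \<lceil>(t - 1) * real s\<rceil> + int s" by (simp only: ceiling_add_of_int)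
  with pos show "nat \<lceil>t * s\<rceil> = s + k" unfolding k_def by (simp add: nat_add_distrib)
qed

lemma error_bound_order_ts:
  fixes A :: "real^'n^'m" and D :: "real^'d^'n" and s :: nat and xh x :: "real^'n"
  assumes DDt: "D ** transpose D = mat 1"
    and alpha: "0 < \<alpha>" "\<alpha> \<le> 1" and lam: "lam > 0" and s: "s \<ge> 2" and W0: "W \<ge> 0"
    and K: "K = 2 + (2 * \<alpha> + 1) / (2 * sqrt s)"
    and S: "card S = s"
  defines "v \<equiv> transpose D *v (xh - x)" and "\<eta> \<equiv> norm (A *v (xh - x))"
  assumes R1: "norm (xh - x) \<le> K * norm (vec_restrict S v) + (W + \<eta>) / 2"
    and R2: "norm1 (vec_restrict (-S) v) \<le> (sqrt s + \<alpha> * K) * norm (vec_restrict S v) + (1 + \<alpha> / 2) * (W + \<eta>)"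
    and R3: "\<eta>\<^sup>2 - lam * \<eta> \<le> lam * (W + (sqrt s + \<alpha>) * norm (vec_restrict S v))"
  shows
    "\<forall>t::real. t \<ge> 3 \<longrightarrow>
       (let \<delta> = DRIC A D (nat \<lceil>t * s\<rceil>);
            \<theta> = DROC A D (nat \<lceil>t * s\<rceil>) (nat \<lceil>(t - 1) * s\<rceil>);
            \<rho> = \<delta> + sqrt (real_of_int \<lceil>(t - 1) * s\<rceil> / ((t - 1)\<^sup>2 * s))
                   * ((sqrt 2 + 1) * (sqrt s + \<alpha>) / (sqrt 2 * (sqrt s - 1))) * \<theta>
        in \<rho> < 1 \<longrightarrow>
          (let \<tau> = (sqrt 2 + 1) * \<theta> / (sqrt 2 * (1 - \<rho>))
                     * (sqrt ((t - 1) * s) / ((t - 1) * (s - sqrt s)));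
               C = 1 + (sqrt 2 + 1) * \<theta> / (sqrt 2 * (1 - \<rho>))
                     * ((sqrt s + \<alpha>) / (s - sqrt s)) * (sqrt ((t - 1) * s) / (t - 1));
               Q = C * (1 - \<rho>) + (sqrt s + \<alpha>) * sqrt (1 + \<delta>)
           in norm (xh - x) \<le> err_bound s \<alpha> lam K W \<rho> \<delta> \<tau> C Q))"
  unfolding Let_def
proof (intro allI impI)
  fix t :: real
  assume t: "t \<ge> 3"
  define k where "k = nat \<lceil>(t - 1) * s\<rceil>"
  define r where "r = sqrt (real s)"
  define \<delta> \<theta> where "\<delta> = DRIC A D (nat \<lceil>t * s\<rceil>)" and "\<theta> = DROC A D (nat \<lceil>t * s\<rceil>) (nat \<lceil>(t - 1) * s\<rceil>)"
  define \<rho> where "\<rho> = \<delta> + sqrt (real_of_int \<lceil>(t - 1) * s\<rceil> / ((t - 1)\<^sup>2 * s))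
    * ((sqrt 2 + 1) * (r + \<alpha>) / (sqrt 2 * (r - 1))) * \<theta>"
  define \<tau> where "\<tau> = (sqrt 2 + 1) * \<theta> / (sqrt 2 * (1 - \<rho>)) * (sqrt ((t - 1) * s) / ((t - 1) * (s - r)))"
  define C where "C = 1 + (sqrt 2 + 1) * \<theta> / (sqrt 2 * (1 - \<rho>))
    * ((r + \<alpha>) / (s - r)) * (sqrt ((t - 1) * s) / (t - 1))"
  define Q where "Q = C * (1 - \<rho>) + (r + \<alpha>) * sqrt (1 + \<delta>)"
  assume \<rho>1: "\<rho> < 1"
  have r75: "r \<ge> 7/5" unfolding r_def using s by (rule sqrt_nat_ge_7_5)
  note k_facts = ceiling_order_split[OF t s, folded k_def]
  note kr = k_facts(1) and kge = k_facts(2) and kpos = k_facts(3) and k_ts = k_facts(4)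
  have \<theta>0: "\<theta> \<ge> 0" unfolding \<theta>_def by (rule DROC_nonneg[OF DDt])
  have K0: "K \<ge> 0" unfolding K using alpha by simp
  have sk: "sqrt k > 0" using kpos by simp
  obtain H where H: "S \<subseteq> H"
    "(1 - \<delta>) * norm (vec_restrict H v) \<le> sqrt (1 + \<delta>) * \<eta> + \<theta> * (norm1 (vec_restrict (-S) v) / sqrt k)"
    using DRIC_DROC_extended_bound[OF DDt S kpos, of A "xh - x"]
    unfolding \<delta>_def \<theta>_def k_ts k_def[symmetric] v_def \<eta>_def by blast
  define aS aH where "aS = norm (vec_restrict S v)" and "aH = norm (vec_restrict H v)"
  have aSH: "aS \<le> aH" unfolding aS_def aH_def by (rule norm_vec_restrict_mono[OF H(1)])
  have "(r + \<alpha> * K) * aS \<le> (r + \<alpha> * K) * aH"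
    using aSH r75 alpha K0 by (intro mult_left_mono) auto
  then have "norm1 (vec_restrict (-S) v) / sqrt k \<le> ((r + \<alpha> * K) * aH + (1 + \<alpha> / 2) * (W + \<eta>)) / sqrt k"
    using R2 sk unfolding aS_def r_def by (intro divide_right_mono) auto
  also have "\<dots> = ((r + \<alpha> * K) / sqrt k) * aH + ((1 + \<alpha> / 2) / sqrt k) * (W + \<eta>)"
    by (simp add: add_divide_distrib times_divide_eq_left[symmetric] del: times_divide_eq_left)
  finally have rip: "(1 - \<delta>) * aH \<le> sqrt (1 + \<delta>) * \<eta> + \<theta> * (((r + \<alpha> * K) / sqrt k) * aH + ((1 + \<alpha> / 2) / sqrt k) * (W + \<eta>))"
    using H(2) mult_left_mono[of _ _ \<theta>] \<theta>0 unfolding aH_def by (smt (verit))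
  show "norm (xh - x) \<le> err_bound s \<alpha> lam K W \<rho> \<delta> \<tau> C Q"
  proof (rule err_bound_of_estimates[where a=aH, OF _ _ rip])
    show "norm (xh - x) \<le> K * aH + (W + \<eta>) / 2"
      using R1 mult_left_mono[OF aSH K0] unfolding aS_def by linarith
    show "\<eta>\<^sup>2 - lam * \<eta> \<le> lam * (W + (sqrt s + \<alpha>) * aH)"
    proof -
      have "(sqrt s + \<alpha>) * aS \<le> (sqrt s + \<alpha>) * aH" using aSH alpha by (intro mult_left_mono) auto
      then have "lam * (W + (sqrt s + \<alpha>) * aS) \<le> lam * (W + (sqrt s + \<alpha>) * aH)" using lam by simp
      then show ?thesis using R3 unfolding aS_def by linarith
    qed
    have "(r + \<alpha> * K) / sqrt k \<le> sqrt (real k / ((t - 1)\<^sup>2 * s)) * ((sqrt 2 + 1) * (r + \<alpha>) / (sqrt 2 * (r - 1)))"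
      using order_ts_rho_coeff_ge[OF r_def _ alpha t kge] s unfolding K r_def by simp
    from mult_left_mono[OF this \<theta>0] show "\<delta> + \<theta> * ((r + \<alpha> * K) / sqrt k) \<le> \<rho>"
      unfolding \<rho>_def kr[symmetric] by (simp add: mult.commute mult.left_commute)
    show "\<rho> < 1" by (rule \<rho>1)
    have "\<theta> / (1 - \<rho>) * ((1 + \<alpha> / 2) / sqrt k)
        \<le> \<theta> / (1 - \<rho>) * (sqrt ((t - 1) * s) / ((t - 1) * (s - r)) * ((sqrt 2 + 1) / sqrt 2))"
      using order_ts_tau_coeff_ge[OF r_def _ alpha t kge] s \<theta>0 \<rho>1 by (intro mult_left_mono) auto
    then show "\<theta> * ((1 + \<alpha> / 2) / sqrt k) / (1 - \<rho>) \<le> \<tau>" unfolding \<tau>_def by (simp add: field_simps)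
    show "C = 1 + (sqrt s + \<alpha>) * \<tau>" unfolding C_def \<tau>_def r_def by (simp add: field_simps)
  qed (use alpha lam W0 K0 \<theta>0 r75 sk DRIC_nonneg in \<open>auto simp: r_def aH_def \<eta>_def Q_def \<delta>_def\<close>)
qed

theorem theorem2:
  fixes A :: "real^'n^'m" and D :: "real^'d^'n"
    and \<alpha> lam \<mu> :: real and s :: nat
    and x :: "real^'n" and e :: "real^'m" and b :: "real^'m"
    and T :: "'d set" and xh :: "real^'n" and zh :: "real^'d"
    and K W :: real
  assumes DDt: "D ** transpose D = mat 1"
    and alpha: "0 < \<alpha>" "\<alpha> \<le> 1"
    and lam: "lam > 0" and mu: "\<mu> > 0"
    and s: "s \<ge> 2"
    and b: "b = A *v x + e" and e: "norm e \<le> lam"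
    and Tcard: "card T = s"
    and Tlargest: "\<forall>i\<in>T. \<forall>j. j \<notin> T \<longrightarrow> \<bar>(transpose D *v x) $ j\<bar> \<le> \<bar>(transpose D *v x) $ i\<bar>"
    and minimizer: "\<forall>x' z'. objective lam \<alpha> \<mu> A D b xh zh \<le> objective lam \<alpha> \<mu> A D b x' z'"
    and K_def: "K = sqrt ((\<alpha> + sqrt s) / sqrt s + \<alpha>^2 / (4 * s)) + (\<alpha> + 1) / (2 * sqrt s) + 1"
    and W_def: "W = 2 * norm1 (transpose (Dcols (- T) D) *v x)
                    + (\<alpha> + 1)^2 * real CARD('d) / 2 * (lam / \<mu>)"
  shows
    "(\<forall>t::real. t \<ge> 3 \<longrightarrow>
       (let \<delta> = DRIC A D (nat \<lceil>t * s\<rceil>);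
            \<theta> = DROC A D (nat \<lceil>t * s\<rceil>) (nat \<lceil>(t - 1) * s\<rceil>);
            \<rho> = \<delta> + sqrt (real_of_int \<lceil>(t - 1) * s\<rceil> / ((t - 1)^2 * s))
                   * ((sqrt 2 + 1) * (sqrt s + \<alpha>) / (sqrt 2 * (sqrt s - 1))) * \<theta>
        in \<rho> < 1 \<longrightarrow>
          (let \<tau> = (sqrt 2 + 1) * \<theta> / (sqrt 2 * (1 - \<rho>))
                     * (sqrt ((t - 1) * s) / ((t - 1) * (s - sqrt s)));
               C = 1 + (sqrt 2 + 1) * \<theta> / (sqrt 2 * (1 - \<rho>))
                     * ((sqrt s + \<alpha>) / (s - sqrt s)) * (sqrt ((t - 1) * s) / (t - 1));
               Q = C * (1 - \<rho>) + (sqrt s + \<alpha>) * sqrt (1 + \<delta>)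
           in norm (xh - x) \<le> err_bound s \<alpha> lam K W \<rho> \<delta> \<tau> C Q)))
     \<and>
     (let \<delta> = DRIC A D s;
          \<theta> = DROC A D s s;
          \<rho> = \<delta> + (sqrt 2 + 1) * (sqrt s + \<alpha>) / (sqrt 2 * (sqrt s - 1)) * \<theta>
      in \<rho> < 1 \<longrightarrow>
        (let \<tau> = (sqrt 2 + 1) * \<theta> / (sqrt 2 * (1 - \<rho>)) * (1 / (sqrt s - 1));
             C = 1 + (sqrt 2 + 1) * \<theta> / (sqrt 2 * (1 - \<rho>)) * ((sqrt s + \<alpha>) / (sqrt s - 1));
             Q = C * (1 - \<rho>) + (sqrt s + \<alpha>) * sqrt (1 + \<delta>)
         in norm (xh - x) \<le> err_bound s \<alpha> lam K W \<rho> \<delta> \<tau> C Q))"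
proof -
  have K: "K = 2 + (2 * \<alpha> + 1) / (2 * sqrt s)"
    using K_def K_closed_form[of "real s" \<alpha>] s alpha by simp
  have W0: "W \<ge> 0"
    unfolding W_def using lam mu norm1_nonneg[of "transpose (Dcols (- T) D) *v x"] by simp
  have "s \<le> CARD('d)" using Tcard card_mono[of UNIV T] by simp
  then obtain S where S: "card S = s" "largest_entries S (transpose D *v (xh - x))"
    by (rule exists_largest_entries)
  have "s \<ge> 1" using s by simp
  note bounds = recovery_error_bounds[OF DDt less_imp_le[OF alpha(1)] alpha(2) lam mu b e minimizer
      W_def S(2) S(1) this Tcard, folded K]
  show ?thesis
    using error_bound_order_ts[OF DDt alpha lam s W0 K S(1) bounds]
      error_bound_order_s[OF DDt alpha lam s W0 K S(2) S(1) bounds] by blast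
qed

end
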